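(* Let $(A,\mathfrak m)$ be a local Noetherian normal integral domain, and let $I_1,I_2,\dots$ be nonzero prime ideals of $A$ with $\lim_{n\to\infty}I_n=0$ in the $\mathfrak m$-adic topology. Set $P=\prod_n A/I_n$ and $S=\bigoplus_n A/I_n\subseteq P$. If $M$ is a finitely generated $A$-module with $\operatorname{Hom}_A(M,A/I_n)\cong A/I_n$ for all $n$, then $\operatorname{Hom}_A(M,P/S)\cong P/S$.
   Context: $\lim_{n\to\infty}I_n=0$ in the $\mathfrak m$-adic topology means: for every $i\ge1$ there is $n_i$ such that $I_n\subseteq\mathfrak m^i$ for all $n\ge n_i$. *)

theory Defs
  imports "HOL-Algebra.Algebra"
begin

definition local_ring_with :: "('a, 'b) ring_scheme \<Rightarrow> 'a set \<Rightarrow> bool" where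
  "local_ring_with A m \<longleftrightarrow> maximalideal m A \<and> (\<forall>J. maximalideal J A \<longrightarrow> J = m)"

text \<open>An element a/b
 (b nonzero) of the fraction field is integral over A iff there are n \<ge> 1 and
 c_0,...,c_(n-1) in A with (a/b)^n + sum c_i (a/b)^i = 0, i.e. after clearing
 denominators a^n + sum_(i<n) c_i a^i b^(n-i) = 0; it lies in A iff b divides a.\<close>
definition normal_domain :: "('a, 'b) ring_scheme \<Rightarrow> bool" where
  "normal_domain A \<longleftrightarrow> domain A \<and>
     (\<forall>a\<in>carrier A. \<forall>b\<in>carrier A. b \<noteq> \<zero>\<^bsub>A\<^esub> \<longrightarrow>
        (\<exists>n::nat. n \<ge> 1 \<and> (\<exists>c. c \<in> {..<n} \<rightarrow> carrier A \<and>
            a [^]\<^bsub>A\<^esub> n \<oplus>\<^bsub>A\<^esub>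
              (\<Oplus>\<^bsub>A\<^esub>i\<in>{..<n}. c i \<otimes>\<^bsub>A\<^esub> a [^]\<^bsub>A\<^esub> i \<otimes>\<^bsub>A\<^esub> b [^]\<^bsub>A\<^esub> (n - i))
            = \<zero>\<^bsub>A\<^esub>))
        \<longrightarrow> (\<exists>x\<in>carrier A. a = b \<otimes>\<^bsub>A\<^esub> x))"

definition ideal_pow :: "('a, 'b) ring_scheme \<Rightarrow> 'a set \<Rightarrow> nat \<Rightarrow> 'a set" where
  "ideal_pow A m i = m [^]\<^bsub>ideals_set A\<^esub> i"

definition fin_gen_module :: "('a, 'c) ring_scheme \<Rightarrow> ('a, 'm) module \<Rightarrow> bool" where
  "fin_gen_module A M \<longleftrightarrow> (\<exists>G. finite G \<and> G \<subseteq> carrier M \<and>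
      carrier M = \<Inter>{H. submodule H A M \<and> G \<subseteq> H})"

definition self_module :: "('a, 'c) ring_scheme \<Rightarrow> ('a, 'a) module" where
  "self_module A = \<lparr>carrier = carrier A, monoid.mult = monoid.mult A, one = monoid.one A, ring.zero = ring.zero A,
     ring.add = add A, smult = monoid.mult A\<rparr>"

definition quot_module :: "('a, 'c) ring_scheme \<Rightarrow> ('a, 'm) module \<Rightarrow> 'm set \<Rightarrow> ('a, 'm set) module" where
  "quot_module A M N = \<lparr>carrier = a_rcosets\<^bsub>M\<^esub> N,
     monoid.mult = set_add M, one = N, ring.zero = N,
     ring.add = set_add M,
     smult = (\<lambda>a Y. set_add M N ((\<lambda>x. a \<odot>\<^bsub>M\<^esub> x) ` Y))\<rparr>"

definition prod_module :: "('a, 'c) ring_scheme \<Rightarrow> (nat \<Rightarrow> ('a, 'm) module) \<Rightarrow> ('a, nat \<Rightarrow> 'm) module" where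
  "prod_module A Ms = \<lparr>carrier = {f. \<forall>n. f n \<in> carrier (Ms n)},
     monoid.mult = (\<lambda>f g n. f n \<oplus>\<^bsub>Ms n\<^esub> g n), one = (\<lambda>n. \<zero>\<^bsub>Ms n\<^esub>), ring.zero = (\<lambda>n. \<zero>\<^bsub>Ms n\<^esub>),
     ring.add = (\<lambda>f g n. f n \<oplus>\<^bsub>Ms n\<^esub> g n),
     smult = (\<lambda>a f n. a \<odot>\<^bsub>Ms n\<^esub> f n)\<rparr>"

definition dsum_set :: "(nat \<Rightarrow> ('a, 'm) module) \<Rightarrow> (nat \<Rightarrow> 'm) set" where
  "dsum_set Ms = {f. (\<forall>n. f n \<in> carrier (Ms n)) \<and> finite {n. f n \<noteq> \<zero>\<^bsub>Ms n\<^esub>}}"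

definition mod_hom :: "('a, 'c) ring_scheme \<Rightarrow> ('a, 'm) module \<Rightarrow> ('a, 'n) module \<Rightarrow> ('m \<Rightarrow> 'n) set" where
  "mod_hom A M N = {f. f \<in> carrier M \<rightarrow> carrier N \<and> f \<in> extensional (carrier M) \<and>
     (\<forall>x\<in>carrier M. \<forall>y\<in>carrier M. f (x \<oplus>\<^bsub>M\<^esub> y) = f x \<oplus>\<^bsub>N\<^esub> f y) \<and>
     (\<forall>a\<in>carrier A. \<forall>x\<in>carrier M. f (a \<odot>\<^bsub>M\<^esub> x) = a \<odot>\<^bsub>N\<^esub> f x)}"

text \<open>The A-module Hom_A(M,N) with pointwise operations
  (the multiplicative fields of the record are irrelevant).\<close>
definition Hom_module :: "('a, 'c) ring_scheme \<Rightarrow> ('a, 'm) module \<Rightarrow> ('a, 'n) module \<Rightarrow> ('a, 'm \<Rightarrow> 'n) module" where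
  "Hom_module A M N = \<lparr>carrier = mod_hom A M N,
     monoid.mult = (\<lambda>f g. \<lambda>x\<in>carrier M. f x \<oplus>\<^bsub>N\<^esub> g x),
     one = (\<lambda>x\<in>carrier M. \<zero>\<^bsub>N\<^esub>), ring.zero = (\<lambda>x\<in>carrier M. \<zero>\<^bsub>N\<^esub>),
     ring.add = (\<lambda>f g. \<lambda>x\<in>carrier M. f x \<oplus>\<^bsub>N\<^esub> g x),
     smult = (\<lambda>a f. \<lambda>x\<in>carrier M. a \<odot>\<^bsub>N\<^esub> f x)\<rparr>"

definition mod_isomorphic :: "('a, 'c) ring_scheme \<Rightarrow> ('a, 'm) module \<Rightarrow> ('a, 'n) module \<Rightarrow> bool" where
  "mod_isomorphic A M N \<longleftrightarrow> (\<exists>f \<in> mod_hom A M N. bij_betw f (carrier M) (carrier N))"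

end

theory Submission
  imports Defs
begin

text \<open>Only the facts that \<open>A\<close> is a Noetherian commutative ring and that \<open>M\<close> is finitely
  generated matter; the statement holds for any family of modules \<open>N\<^sub>n\<close> in place of the
  \<open>A/I\<^sub>n\<close>. A family of maps \<open>g\<^sub>n : M \<rightarrow> N\<^sub>n\<close> induces \<open>M \<rightarrow> \<Prod>N\<^sub>n/\<Oplus>N\<^sub>n\<close>, and two families
  induce the same map iff they differ in finitely many places, because \<open>M\<close> is generated by finitely
  many elements. Every map \<open>f : M \<rightarrow> \<Prod>N\<^sub>n/\<Oplus>N\<^sub>n\<close> arises this way: lift the images of the
  generators to \<open>\<Prod>N\<^sub>n\<close>; since \<open>A\<close> is Noetherian the relations among the generators form a
  finitely generated submodule of \<open>A\<^sup>r\<close>, so they are sent into finitely many coordinates, which are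
  simply set to zero. Hence \<open>Hom(M, \<Prod>N\<^sub>n/\<Oplus>N\<^sub>n) \<cong> \<Prod>Hom(M,N\<^sub>n)/\<Oplus>Hom(M,N\<^sub>n)\<close>, and the
  isomorphisms \<open>Hom(M, A/I\<^sub>n) \<cong> A/I\<^sub>n\<close> assemble to \<open>\<Prod>(A/I\<^sub>n)/\<Oplus>(A/I\<^sub>n)\<close>.\<close>

lemma quot_module_simps:
  "carrier (quot_module A M N) = a_rcosets\<^bsub>M\<^esub> N"
  "\<zero>\<^bsub>quot_module A M N\<^esub> = N"
  "U \<oplus>\<^bsub>quot_module A M N\<^esub> V = set_add M U V"
  "a \<odot>\<^bsub>quot_module A M N\<^esub> V = set_add M N ((\<lambda>x. a \<odot>\<^bsub>M\<^esub> x) ` V)"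
  by (simp_all add: quot_module_def)

lemma self_module_simps:
  "carrier (self_module A) = carrier A"
  "\<zero>\<^bsub>self_module A\<^esub> = \<zero>\<^bsub>A\<^esub>"
  "x \<oplus>\<^bsub>self_module A\<^esub> y = x \<oplus>\<^bsub>A\<^esub> y"
  "a \<odot>\<^bsub>self_module A\<^esub> x = a \<otimes>\<^bsub>A\<^esub> x"
  by (simp_all add: self_module_def)

lemma prod_module_simps:
  "carrier (prod_module A N) = {f. \<forall>n. f n \<in> carrier (N n)}"
  "\<zero>\<^bsub>prod_module A N\<^esub> = (\<lambda>n. \<zero>\<^bsub>N n\<^esub>)"
  "f \<oplus>\<^bsub>prod_module A N\<^esub> g = (\<lambda>n. f n \<oplus>\<^bsub>N n\<^esub> g n)"
  "a \<odot>\<^bsub>prod_module A N\<^esub> f = (\<lambda>n. a \<odot>\<^bsub>N n\<^esub> f n)"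
  by (simp_all add: prod_module_def)

lemma Hom_module_simps:
  "carrier (Hom_module A M N) = mod_hom A M N"
  "f \<oplus>\<^bsub>Hom_module A M N\<^esub> g = (\<lambda>x\<in>carrier M. f x \<oplus>\<^bsub>N\<^esub> g x)"
  "c \<odot>\<^bsub>Hom_module A M N\<^esub> f = (\<lambda>x\<in>carrier M. c \<odot>\<^bsub>N\<^esub> f x)"
  by (simp_all add: Hom_module_def)

lemma comm_group_cong:
  assumes G: "comm_group G" and carrier: "carrier H = carrier G"
    and mult: "\<And>x y. x \<otimes>\<^bsub>H\<^esub> y = x \<otimes>\<^bsub>G\<^esub> y" and one: "\<one>\<^bsub>H\<^esub> = \<one>\<^bsub>G\<^esub>"
  shows "comm_group H"
proof -
  interpret G: comm_group G by (rule G)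
  show ?thesis
    by (rule comm_groupI) (auto simp: carrier mult one G.m_assoc G.m_comm G.m_lcomm intro: G.l_inv_ex)
qed

lemma (in abelian_group) add_minus_eq_zero_iff:
  "x \<in> carrier G \<Longrightarrow> y \<in> carrier G \<Longrightarrow> x \<oplus> \<ominus> y = \<zero> \<longleftrightarrow> x = y"
  by (metis r_neg1 a_closed a_inv_closed add.l_cancel_one)

section \<open>Quotient modules\<close>

context
  fixes R :: "('a, 'c) ring_scheme" and M :: "('a, 'm) module"
  assumes M: "module R M"
begin

interpretation module R M by (rule M)

lemma submodule_abelian_subgroup: "submodule N R M \<Longrightarrow> abelian_subgroup N M"
  by (rule abelian_subgroupI3)
    (auto intro: additive_subgroup.intro submodule.axioms(1) abelian_group_axioms)

lemma quot_module_carrier: "carrier (quot_module R M N) = {N +>\<^bsub>M\<^esub> x | x. x \<in> carrier M}"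
  by (auto simp: quot_module_simps A_RCOSETS_def')

lemma quot_module_add_rcos:
  assumes "submodule N R M" "x \<in> carrier M" "y \<in> carrier M"
  shows "(N +>\<^bsub>M\<^esub> x) \<oplus>\<^bsub>quot_module R M N\<^esub> (N +>\<^bsub>M\<^esub> y) = N +>\<^bsub>M\<^esub> (x \<oplus>\<^bsub>M\<^esub> y)"
  using abelian_subgroup.a_rcos_sum[OF submodule_abelian_subgroup[OF assms(1)]] assms
  by (simp add: quot_module_simps)

lemma quot_module_smult_rcos:
  assumes N: "submodule N R M" and a: "a \<in> carrier R" and x: "x \<in> carrier M"
  shows "a \<odot>\<^bsub>quot_module R M N\<^esub> (N +>\<^bsub>M\<^esub> x) = N +>\<^bsub>M\<^esub> (a \<odot>\<^bsub>M\<^esub> x)"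
  unfolding quot_module_simps
proof (rule equalityI; rule subsetI)
  have NM: "N \<subseteq> carrier M" using N submoduleE(1) by blast
  fix z assume "z \<in> set_add M N ((\<lambda>x. a \<odot>\<^bsub>M\<^esub> x) ` (N +>\<^bsub>M\<^esub> x))"
  then obtain n n' where nn: "n \<in> N" "n' \<in> N" "z = n \<oplus>\<^bsub>M\<^esub> a \<odot>\<^bsub>M\<^esub> (n' \<oplus>\<^bsub>M\<^esub> x)"
    by (auto simp: set_add_def' a_r_coset_def')
  then have "z = (n \<oplus>\<^bsub>M\<^esub> a \<odot>\<^bsub>M\<^esub> n') \<oplus>\<^bsub>M\<^esub> a \<odot>\<^bsub>M\<^esub> x"
    using NM a x by (simp add: smult_r_distr a_assoc subsetD)
  moreover have "n \<oplus>\<^bsub>M\<^esub> a \<odot>\<^bsub>M\<^esub> n' \<in> N" using nn(1,2) submoduleE(4,5)[OF N] a by blast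
  ultimately show "z \<in> N +>\<^bsub>M\<^esub> (a \<odot>\<^bsub>M\<^esub> x)" unfolding a_r_coset_def' by blast
next
  fix z assume "z \<in> N +>\<^bsub>M\<^esub> (a \<odot>\<^bsub>M\<^esub> x)"
  then obtain n where n: "n \<in> N" "z = n \<oplus>\<^bsub>M\<^esub> a \<odot>\<^bsub>M\<^esub> x" by (auto simp: a_r_coset_def')
  have "x \<in> N +>\<^bsub>M\<^esub> x"
    using abelian_subgroup.a_rcos_self[OF submodule_abelian_subgroup[OF N] x] .
  then show "z \<in> set_add M N ((\<lambda>x. a \<odot>\<^bsub>M\<^esub> x) ` (N +>\<^bsub>M\<^esub> x))"
    using n by (auto simp: set_add_def')
qed

lemma quot_module_rcos_eq_iff:
  assumes "submodule N R M" "x \<in> carrier M" "y \<in> carrier M"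
  shows "N +>\<^bsub>M\<^esub> x = N +>\<^bsub>M\<^esub> y \<longleftrightarrow> x \<oplus>\<^bsub>M\<^esub> \<ominus>\<^bsub>M\<^esub> y \<in> N"
  using assms abelian_subgroup.a_rcos_module[OF submodule_abelian_subgroup[OF assms(1)]]
    abelian_subgroup.a_repr_independence'[OF submodule_abelian_subgroup[OF assms(1)]]
    abelian_subgroup.a_repr_independenceD[OF submodule_abelian_subgroup[OF assms(1)]]
  by metis

lemma module_quot_module:
  assumes N: "submodule N R M"
  shows "module R (quot_module R M N)"
proof (rule moduleI)
  show "cring R" by (rule R.is_cring)
  have "comm_group (M A_Mod N)"
    using abelian_subgroup.a_factorgroup_is_comm_group[OF submodule_abelian_subgroup[OF N]] .
  then have "comm_group (add_monoid (quot_module R M N))"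
    by (rule comm_group_cong) (simp_all add: quot_module_def A_FactGroup_def')
  then show "abelian_group (quot_module R M N)" by (rule comm_group_abelian_groupI)
  fix a b U V
  assume a: "a \<in> carrier R" and U: "U \<in> carrier (quot_module R M N)"
  then obtain x where x: "x \<in> carrier M" and Ux: "U = N +>\<^bsub>M\<^esub> x"
    by (auto simp: quot_module_carrier)
  show "a \<odot>\<^bsub>quot_module R M N\<^esub> U \<in> carrier (quot_module R M N)"
    using a x unfolding Ux quot_module_smult_rcos[OF N a x] quot_module_carrier by blast
  show "(a \<oplus>\<^bsub>R\<^esub> b) \<odot>\<^bsub>quot_module R M N\<^esub> U =
      a \<odot>\<^bsub>quot_module R M N\<^esub> U \<oplus>\<^bsub>quot_module R M N\<^esub> b \<odot>\<^bsub>quot_module R M N\<^esub> U"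
    if b: "b \<in> carrier R"
    using a b x
    by (simp add: Ux quot_module_smult_rcos[OF N] quot_module_add_rcos[OF N] smult_l_distr)
  show "a \<odot>\<^bsub>quot_module R M N\<^esub> (U \<oplus>\<^bsub>quot_module R M N\<^esub> V) =
      a \<odot>\<^bsub>quot_module R M N\<^esub> U \<oplus>\<^bsub>quot_module R M N\<^esub> a \<odot>\<^bsub>quot_module R M N\<^esub> V"
    if V: "V \<in> carrier (quot_module R M N)"
  proof -
    obtain y where y: "y \<in> carrier M" and Vy: "V = N +>\<^bsub>M\<^esub> y"
      using V by (auto simp: quot_module_carrier)
    show ?thesis
      using a x y
      by (simp add: Ux Vy quot_module_smult_rcos[OF N] quot_module_add_rcos[OF N] smult_r_distr)
  qed
  show "(a \<otimes>\<^bsub>R\<^esub> b) \<odot>\<^bsub>quot_module R M N\<^esub> U = a \<odot>\<^bsub>quot_module R M N\<^esub> (b \<odot>\<^bsub>quot_module R M N\<^esub> U)"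
    if b: "b \<in> carrier R"
    using a b x by (simp add: Ux quot_module_smult_rcos[OF N] smult_assoc1)
next
  fix U assume "U \<in> carrier (quot_module R M N)"
  then obtain x where x: "x \<in> carrier M" and Ux: "U = N +>\<^bsub>M\<^esub> x"
    by (auto simp: quot_module_carrier)
  show "\<one>\<^bsub>R\<^esub> \<odot>\<^bsub>quot_module R M N\<^esub> U = U"
    using x by (simp add: Ux quot_module_smult_rcos[OF N])
qed

end

lemma abelian_group_prod_module:
  assumes N: "\<And>n. module A (N n)"
  shows "abelian_group (prod_module A N)"
proof -
  have G: "\<And>n. abelian_group (N n)" using N module.axioms(2) by blast
  have G': "\<And>n. abelian_monoid (N n)" using G abelian_group.axioms(1) by blast
  have "comm_group (add_monoid (prod_module A N))"
  proof (rule comm_groupI)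
    fix x y z
    assume x: "x \<in> carrier (add_monoid (prod_module A N))"
       and y: "y \<in> carrier (add_monoid (prod_module A N))"
       and z: "z \<in> carrier (add_monoid (prod_module A N))"
    show "x \<otimes>\<^bsub>add_monoid (prod_module A N)\<^esub> y \<in> carrier (add_monoid (prod_module A N))"
      using x y G' by (simp add: prod_module_def abelian_monoid.a_closed)
    show "x \<otimes>\<^bsub>add_monoid (prod_module A N)\<^esub> y \<otimes>\<^bsub>add_monoid (prod_module A N)\<^esub> z =
          x \<otimes>\<^bsub>add_monoid (prod_module A N)\<^esub> (y \<otimes>\<^bsub>add_monoid (prod_module A N)\<^esub> z)"
      using x y z G' by (simp add: prod_module_def abelian_monoid.a_assoc)
    show "x \<otimes>\<^bsub>add_monoid (prod_module A N)\<^esub> y = y \<otimes>\<^bsub>add_monoid (prod_module A N)\<^esub> x"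
      using x y G' by (simp add: prod_module_def abelian_monoid.a_comm)
    show "\<one>\<^bsub>add_monoid (prod_module A N)\<^esub> \<otimes>\<^bsub>add_monoid (prod_module A N)\<^esub> x = x"
      using x G' by (simp add: prod_module_def abelian_monoid.l_zero)
    show "\<exists>y\<in>carrier (add_monoid (prod_module A N)).
        y \<otimes>\<^bsub>add_monoid (prod_module A N)\<^esub> x = \<one>\<^bsub>add_monoid (prod_module A N)\<^esub>"
      using x G by (intro bexI[of _ "\<lambda>n. \<ominus>\<^bsub>N n\<^esub> x n"])
        (simp_all add: prod_module_def abelian_group.l_neg abelian_group.a_inv_closed)
  next
    show "\<one>\<^bsub>add_monoid (prod_module A N)\<^esub> \<in> carrier (add_monoid (prod_module A N))"
      using G' by (simp add: prod_module_def abelian_monoid.zero_closed)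
  qed
  then show ?thesis by (rule comm_group_abelian_groupI)
qed

lemma module_prod_module:
  assumes N: "\<And>n. module A (N n)"
  shows "module A (prod_module A N)"
  by (rule moduleI[OF module.axioms(1)[OF N] abelian_group_prod_module[OF N]])
    (auto simp: prod_module_simps module.smult_l_distr[OF N] module.smult_r_distr[OF N]
      module.smult_assoc1[OF N] module.smult_one[OF N] intro: module.smult_closed[OF N])

lemma prod_module_a_inv:
  assumes N: "\<And>n. module A (N n)" and f: "f \<in> carrier (prod_module A N)"
  shows "\<ominus>\<^bsub>prod_module A N\<^esub> f = (\<lambda>n. \<ominus>\<^bsub>N n\<^esub> f n)"
proof -
  have G: "\<And>n. abelian_group (N n)" using N module.axioms(2) by blast
  interpret P: abelian_group "prod_module A N" by (rule abelian_group_prod_module[OF N])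
  have fn: "\<And>n. f n \<in> carrier (N n)" using f by (simp add: prod_module_simps)
  show ?thesis
    using fn G by (intro P.minus_equality f)
      (simp_all add: prod_module_simps abelian_group.l_neg abelian_group.a_inv_closed)
qed

lemma submodule_dsum_set:
  assumes N: "\<And>n. module A (N n)"
  shows "submodule (dsum_set N) A (prod_module A N)"
proof -
  interpret P: module A "prod_module A N" by (rule module_prod_module[OF N])
  have G: "\<And>n. abelian_group (N n)" using N module.axioms(2) by blast
  have G': "\<And>n. abelian_monoid (N n)" using G abelian_group.axioms(1) by blast
  have support_map: "finite {n. h n (f n) \<noteq> \<zero>\<^bsub>N n\<^esub>}"
    if "f \<in> dsum_set N" "\<And>n. h n \<zero>\<^bsub>N n\<^esub> = \<zero>\<^bsub>N n\<^esub>" for f h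
    using that by (auto simp: dsum_set_def elim!: finite_subset[rotated])
  show ?thesis
  proof (rule P.submoduleI)
    show "dsum_set N \<subseteq> carrier (prod_module A N)"
      by (auto simp: dsum_set_def prod_module_simps)
    show "\<zero>\<^bsub>prod_module A N\<^esub> \<in> dsum_set N"
      using G' by (simp add: dsum_set_def prod_module_simps abelian_monoid.zero_closed)
  next
    fix f assume f: "f \<in> dsum_set N"
    then have "f \<in> carrier (prod_module A N)" by (auto simp: dsum_set_def prod_module_simps)
    then show "\<ominus>\<^bsub>prod_module A N\<^esub> f \<in> dsum_set N"
      using support_map[OF f, of "\<lambda>n. a_inv (N n)"] f G
      by (simp add: prod_module_a_inv[OF N] dsum_set_def abelian_group.a_inv_closed
          abelian_group.minus_equality abelian_monoid.zero_closed abelian_monoid.l_zero G')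
  next
    fix f g assume f: "f \<in> dsum_set N" and g: "g \<in> dsum_set N"
    have "{n. f n \<oplus>\<^bsub>N n\<^esub> g n \<noteq> \<zero>\<^bsub>N n\<^esub>} \<subseteq> {n. f n \<noteq> \<zero>\<^bsub>N n\<^esub>} \<union> {n. g n \<noteq> \<zero>\<^bsub>N n\<^esub>}"
      using G' g by (auto simp: dsum_set_def abelian_monoid.l_zero abelian_monoid.zero_closed)
    then show "f \<oplus>\<^bsub>prod_module A N\<^esub> g \<in> dsum_set N"
      using f g G' by (auto simp: prod_module_simps dsum_set_def abelian_monoid.a_closed
          elim!: finite_subset)
  next
    fix a f assume a: "a \<in> carrier A" and f: "f \<in> dsum_set N"
    then show "a \<odot>\<^bsub>prod_module A N\<^esub> f \<in> dsum_set N"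
      using support_map[OF f, of "\<lambda>n. smult (N n) a"] module.smult_r_null[OF N a]
        module.smult_closed[OF N a]
      by (auto simp: prod_module_simps dsum_set_def)
  qed
qed

lemma module_self_module:
  assumes A: "cring A"
  shows "module A (self_module A)"
proof -
  interpret cring A by (rule A)
  have "comm_group (add_monoid (self_module A))"
    by (rule comm_group_cong[OF a_comm_group]) (simp_all add: self_module_def)
  then have "abelian_group (self_module A)" by (rule comm_group_abelian_groupI)
  then show ?thesis
    by (rule moduleI[OF A]) (auto simp: self_module_simps l_distr r_distr m_assoc)
qed

lemma submodule_self_module_ideal:
  assumes A: "cring A" and I: "ideal I A"
  shows "submodule I A (self_module A)"
proof -
  interpret cring A by (rule A)
  interpret ideal I A by (rule I)
  interpret S: module A "self_module A" by (rule module_self_module[OF A])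
  have "\<ominus>\<^bsub>self_module A\<^esub> x = \<ominus>\<^bsub>A\<^esub> x" if "x \<in> carrier A" for x
    using that by (intro S.minus_equality) (auto simp: self_module_simps l_neg)
  then show ?thesis
    by (intro S.submoduleI) (auto simp: self_module_simps I_l_closed)
qed

section \<open>Linear maps and linear combinations\<close>

lemma mod_homI:
  assumes "\<And>x. x \<in> carrier M \<Longrightarrow> f x \<in> carrier N" "f \<in> extensional (carrier M)"
    "\<And>x y. x \<in> carrier M \<Longrightarrow> y \<in> carrier M \<Longrightarrow> f (x \<oplus>\<^bsub>M\<^esub> y) = f x \<oplus>\<^bsub>N\<^esub> f y"
    "\<And>a x. a \<in> carrier A \<Longrightarrow> x \<in> carrier M \<Longrightarrow> f (a \<odot>\<^bsub>M\<^esub> x) = a \<odot>\<^bsub>N\<^esub> f x"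
  shows "f \<in> mod_hom A M N"
  using assms unfolding mod_hom_def by blast

lemma mod_homD:
  assumes "f \<in> mod_hom A M N"
  shows "\<And>x. x \<in> carrier M \<Longrightarrow> f x \<in> carrier N" "f \<in> extensional (carrier M)"
    "\<And>x y. x \<in> carrier M \<Longrightarrow> y \<in> carrier M \<Longrightarrow> f (x \<oplus>\<^bsub>M\<^esub> y) = f x \<oplus>\<^bsub>N\<^esub> f y"
    "\<And>a x. a \<in> carrier A \<Longrightarrow> x \<in> carrier M \<Longrightarrow> f (a \<odot>\<^bsub>M\<^esub> x) = a \<odot>\<^bsub>N\<^esub> f x"
  using assms unfolding mod_hom_def by blast+

lemma mod_hom_zero:
  assumes M: "module A M" and N: "module A N" and g: "g \<in> mod_hom A M N"
  shows "g \<zero>\<^bsub>M\<^esub> = \<zero>\<^bsub>N\<^esub>"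
proof -
  interpret M: module A M by (rule M)
  interpret N: module A N by (rule N)
  have "g \<zero>\<^bsub>M\<^esub> = g (\<zero>\<^bsub>A\<^esub> \<odot>\<^bsub>M\<^esub> \<zero>\<^bsub>M\<^esub>)" by simp
  also have "\<dots> = \<zero>\<^bsub>A\<^esub> \<odot>\<^bsub>N\<^esub> g \<zero>\<^bsub>M\<^esub>" by (rule mod_homD(4)[OF g]) simp_all
  also have "\<dots> = \<zero>\<^bsub>N\<^esub>" using mod_homD(1)[OF g] by simp
  finally show ?thesis .
qed

lemma Hom_module_add_closed:
  assumes M: "module A M" and N: "module A N"
    and f: "f \<in> mod_hom A M N" and g: "g \<in> mod_hom A M N"
  shows "f \<oplus>\<^bsub>Hom_module A M N\<^esub> g \<in> mod_hom A M N"
proof -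
  interpret M: module A M by (rule M)
  interpret N: module A N by (rule N)
  note fg = mod_homD[OF f] mod_homD[OF g]
  show ?thesis
    unfolding Hom_module_simps
  proof (rule mod_homI)
    fix x y assume "x \<in> carrier M" "y \<in> carrier M"
    then show "(\<lambda>x\<in>carrier M. f x \<oplus>\<^bsub>N\<^esub> g x) (x \<oplus>\<^bsub>M\<^esub> y) =
        (\<lambda>x\<in>carrier M. f x \<oplus>\<^bsub>N\<^esub> g x) x \<oplus>\<^bsub>N\<^esub> (\<lambda>x\<in>carrier M. f x \<oplus>\<^bsub>N\<^esub> g x) y"
      using fg by (simp add: N.a_ac)
  next
    fix a x assume "a \<in> carrier A" "x \<in> carrier M"
    then show "(\<lambda>x\<in>carrier M. f x \<oplus>\<^bsub>N\<^esub> g x) (a \<odot>\<^bsub>M\<^esub> x) = a \<odot>\<^bsub>N\<^esub> (\<lambda>x\<in>carrier M. f x \<oplus>\<^bsub>N\<^esub> g x) x"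
      using fg by (simp add: N.smult_r_distr)
  qed (use fg in auto)
qed

lemma Hom_module_smult_closed:
  assumes M: "module A M" and N: "module A N"
    and f: "f \<in> mod_hom A M N" and c: "c \<in> carrier A"
  shows "c \<odot>\<^bsub>Hom_module A M N\<^esub> f \<in> mod_hom A M N"
proof -
  interpret M: module A M by (rule M)
  interpret N: module A N by (rule N)
  note f' = mod_homD[OF f]
  show ?thesis
    unfolding Hom_module_simps
  proof (rule mod_homI)
    fix x y assume "x \<in> carrier M" "y \<in> carrier M"
    then show "(\<lambda>x\<in>carrier M. c \<odot>\<^bsub>N\<^esub> f x) (x \<oplus>\<^bsub>M\<^esub> y) =
        (\<lambda>x\<in>carrier M. c \<odot>\<^bsub>N\<^esub> f x) x \<oplus>\<^bsub>N\<^esub> (\<lambda>x\<in>carrier M. c \<odot>\<^bsub>N\<^esub> f x) y"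
      using f' c by (simp add: N.smult_r_distr)
  next
    fix a x assume "a \<in> carrier A" "x \<in> carrier M"
    then show "(\<lambda>x\<in>carrier M. c \<odot>\<^bsub>N\<^esub> f x) (a \<odot>\<^bsub>M\<^esub> x) = a \<odot>\<^bsub>N\<^esub> (\<lambda>x\<in>carrier M. c \<odot>\<^bsub>N\<^esub> f x) x"
      using f' c by (simp add: N.smult_assoc1[symmetric] M.m_comm)
  qed (use f' c in auto)
qed

lemma additive_map_finsum:
  assumes G: "abelian_group G" and H: "abelian_group H"
    and h_closed: "\<And>x. x \<in> carrier G \<Longrightarrow> h x \<in> carrier H"
    and h_add: "\<And>x y. x \<in> carrier G \<Longrightarrow> y \<in> carrier G \<Longrightarrow> h (x \<oplus>\<^bsub>G\<^esub> y) = h x \<oplus>\<^bsub>H\<^esub> h y"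
    and F: "finite F" and f: "f \<in> F \<rightarrow> carrier G"
  shows "h (finsum G f F) = finsum H (\<lambda>i. h (f i)) F"
  using F f
proof (induction F rule: finite_induct)
  case empty
  interpret G: abelian_group G by (rule G)
  interpret H: abelian_group H by (rule H)
  have "h \<zero>\<^bsub>G\<^esub> \<oplus>\<^bsub>H\<^esub> h \<zero>\<^bsub>G\<^esub> = h \<zero>\<^bsub>G\<^esub> \<oplus>\<^bsub>H\<^esub> \<zero>\<^bsub>H\<^esub>"
    using h_add[of "\<zero>\<^bsub>G\<^esub>" "\<zero>\<^bsub>G\<^esub>"] h_closed[of "\<zero>\<^bsub>G\<^esub>"] by simp
  then show ?case using h_closed[of "\<zero>\<^bsub>G\<^esub>"] by (simp add: H.add.l_cancel)
next
  case (insert i F)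
  interpret G: abelian_group G by (rule G)
  interpret H: abelian_group H by (rule H)
  have fi: "f i \<in> carrier G" and fF: "f \<in> F \<rightarrow> carrier G" using insert.prems by auto
  then have "(\<lambda>i. h (f i)) \<in> F \<rightarrow> carrier H" using h_closed by auto
  then show ?case
    using insert fi fF by (simp add: h_add h_closed G.finsum_closed)
qed

text \<open>Vectors of \<open>A\<^sup>r\<close> are padded with zeros, so that \<open>A\<^sup>r \<subseteq> A\<^sup>r\<^sup>+\<^sup>1\<close> and vectors are
  compared as functions.\<close>

definition vecs :: "('a, 'b) ring_scheme \<Rightarrow> nat \<Rightarrow> (nat \<Rightarrow> 'a) set" where
  "vecs A r = {a. (\<forall>i<r. a i \<in> carrier A) \<and> (\<forall>i\<ge>r. a i = \<zero>\<^bsub>A\<^esub>)}"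

definition vec_add :: "('a, 'b) ring_scheme \<Rightarrow> (nat \<Rightarrow> 'a) \<Rightarrow> (nat \<Rightarrow> 'a) \<Rightarrow> nat \<Rightarrow> 'a" where
  "vec_add A a b = (\<lambda>i. a i \<oplus>\<^bsub>A\<^esub> b i)"

definition vec_smult :: "('a, 'b) ring_scheme \<Rightarrow> 'a \<Rightarrow> (nat \<Rightarrow> 'a) \<Rightarrow> nat \<Rightarrow> 'a" where
  "vec_smult A c a = (\<lambda>i. c \<otimes>\<^bsub>A\<^esub> a i)"

definition lincomb :: "('a, 'm) module \<Rightarrow> nat \<Rightarrow> (nat \<Rightarrow> 'a) \<Rightarrow> (nat \<Rightarrow> 'm) \<Rightarrow> 'm" where
  "lincomb M r a y = finsum M (\<lambda>i. a i \<odot>\<^bsub>M\<^esub> y i) {..<r}"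

context ring
begin

lemma vecs_carrier: "a \<in> vecs R r \<Longrightarrow> a i \<in> carrier R"
  unfolding vecs_def by (cases "i < r") auto

lemma zero_vecs: "(\<lambda>i. \<zero>) \<in> vecs R r"
  by (simp add: vecs_def)

lemma vec_add_vecs: "a \<in> vecs R r \<Longrightarrow> b \<in> vecs R r \<Longrightarrow> vec_add R a b \<in> vecs R r"
  by (auto simp: vecs_def vec_add_def)

lemma vec_smult_vecs: "c \<in> carrier R \<Longrightarrow> a \<in> vecs R r \<Longrightarrow> vec_smult R c a \<in> vecs R r"
  by (auto simp: vecs_def vec_smult_def)

lemma vecs_Suc_iff: "a \<in> vecs R r \<longleftrightarrow> a \<in> vecs R (Suc r) \<and> a r = \<zero>"
proof
  assume a: "a \<in> vecs R (Suc r) \<and> a r = \<zero>"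
  have "a i = \<zero>" if "r \<le> i" for i
    using a that by (cases "i = r") (auto simp: vecs_def)
  then show "a \<in> vecs R r" using a by (simp add: vecs_def)
qed (auto simp: vecs_def less_Suc_eq)

end

context
  fixes R :: "('a, 'c) ring_scheme" and M :: "('a, 'm) module"
  assumes M: "module R M"
begin

interpretation module R M by (rule M)

lemma lincomb_closed:
  "a \<in> vecs R r \<Longrightarrow> y ` {..<r} \<subseteq> carrier M \<Longrightarrow> lincomb M r a y \<in> carrier M"
  unfolding lincomb_def by (intro finsum_closed) (auto intro: vecs_carrier)

lemma lincomb_zero: "y ` {..<r} \<subseteq> carrier M \<Longrightarrow> lincomb M r (\<lambda>i. \<zero>\<^bsub>R\<^esub>) y = \<zero>\<^bsub>M\<^esub>"
  unfolding lincomb_def by (subst finsum_cong'[of _ _ "\<lambda>i. \<zero>\<^bsub>M\<^esub>"]) auto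

lemma lincomb_zero_right: "a \<in> vecs R r \<Longrightarrow> lincomb M r a (\<lambda>i. \<zero>\<^bsub>M\<^esub>) = \<zero>\<^bsub>M\<^esub>"
  unfolding lincomb_def by (subst finsum_cong'[of _ _ "\<lambda>i. \<zero>\<^bsub>M\<^esub>"]) (auto simp: vecs_carrier)

lemma lincomb_unit:
  assumes "j < r" "y ` {..<r} \<subseteq> carrier M"
  shows "lincomb M r (\<lambda>i. if i = j then \<one>\<^bsub>R\<^esub> else \<zero>\<^bsub>R\<^esub>) y = y j"
proof -
  have "lincomb M r (\<lambda>i. if i = j then \<one>\<^bsub>R\<^esub> else \<zero>\<^bsub>R\<^esub>) y =
      finsum M (\<lambda>i. if j = i then y i else \<zero>\<^bsub>M\<^esub>) {..<r}"
    unfolding lincomb_def using assms by (intro finsum_cong') auto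
  also have "\<dots> = y j" using assms by (intro finsum_singleton) auto
  finally show ?thesis .
qed

lemma lincomb_cong:
  assumes "a \<in> vecs R r" "y ` {..<r} \<subseteq> carrier M" "\<And>i. i < r \<Longrightarrow> y i = z i"
  shows "lincomb M r a y = lincomb M r a z"
  unfolding lincomb_def using assms by (intro finsum_cong') (auto intro: vecs_carrier)

lemma lincomb_vec_add:
  assumes "a \<in> vecs R r" "b \<in> vecs R r" "y ` {..<r} \<subseteq> carrier M"
  shows "lincomb M r (vec_add R a b) y = lincomb M r a y \<oplus>\<^bsub>M\<^esub> lincomb M r b y"
proof -
  have "lincomb M r (vec_add R a b) y = finsum M (\<lambda>i. a i \<odot>\<^bsub>M\<^esub> y i \<oplus>\<^bsub>M\<^esub> b i \<odot>\<^bsub>M\<^esub> y i) {..<r}"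
    unfolding lincomb_def vec_add_def using assms
    by (intro finsum_cong') (auto simp: smult_l_distr vecs_carrier)
  also have "\<dots> = lincomb M r a y \<oplus>\<^bsub>M\<^esub> lincomb M r b y"
    unfolding lincomb_def using assms by (intro finsum_addf) (auto intro: vecs_carrier)
  finally show ?thesis .
qed

lemma lincomb_vec_smult:
  assumes "c \<in> carrier R" "a \<in> vecs R r" "y ` {..<r} \<subseteq> carrier M"
  shows "lincomb M r (vec_smult R c a) y = c \<odot>\<^bsub>M\<^esub> lincomb M r a y"
proof -
  have "lincomb M r (vec_smult R c a) y = finsum M (\<lambda>i. c \<odot>\<^bsub>M\<^esub> (a i \<odot>\<^bsub>M\<^esub> y i)) {..<r}"
    unfolding lincomb_def vec_smult_def using assms
    by (intro finsum_cong') (auto simp: smult_assoc1 vecs_carrier)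
  also have "\<dots> = c \<odot>\<^bsub>M\<^esub> lincomb M r a y"
    unfolding lincomb_def using assms
    by (intro finsum_smult_ldistr[symmetric]) (auto intro: vecs_carrier)
  finally show ?thesis .
qed

end

lemma additive_map_lincomb:
  assumes M: "module R M" and N: "module R N"
    and h_closed: "\<And>x. x \<in> carrier M \<Longrightarrow> h x \<in> carrier N"
    and h_add: "\<And>x y. x \<in> carrier M \<Longrightarrow> y \<in> carrier M \<Longrightarrow> h (x \<oplus>\<^bsub>M\<^esub> y) = h x \<oplus>\<^bsub>N\<^esub> h y"
    and h_smult: "\<And>c x. c \<in> carrier R \<Longrightarrow> x \<in> carrier M \<Longrightarrow> h (c \<odot>\<^bsub>M\<^esub> x) = c \<odot>\<^bsub>N\<^esub> h x"
    and a: "a \<in> vecs R r" and y: "y ` {..<r} \<subseteq> carrier M"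
  shows "h (lincomb M r a y) = lincomb N r a (\<lambda>i. h (y i))"
proof -
  interpret M: module R M by (rule M)
  interpret N: module R N by (rule N)
  have "h (lincomb M r a y) = finsum N (\<lambda>i. h (a i \<odot>\<^bsub>M\<^esub> y i)) {..<r}"
    unfolding lincomb_def
    by (rule additive_map_finsum[OF M.abelian_group_axioms N.abelian_group_axioms h_closed h_add])
      (use a y in \<open>auto intro: M.vecs_carrier\<close>)
  also have "\<dots> = lincomb N r a (\<lambda>i. h (y i))"
    unfolding lincomb_def using a y
    by (intro N.finsum_cong') (auto simp: h_smult h_closed M.vecs_carrier)
  finally show ?thesis .
qed

lemma quot_module_lincomb:
  assumes M: "module R M" and N: "submodule N R M"
    and a: "a \<in> vecs R r" and y: "y ` {..<r} \<subseteq> carrier M"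
  shows "N +>\<^bsub>M\<^esub> lincomb M r a y = lincomb (quot_module R M N) r a (\<lambda>i. N +>\<^bsub>M\<^esub> y i)"
  using additive_map_lincomb[OF M module_quot_module[OF M N], where h = "\<lambda>x. N +>\<^bsub>M\<^esub> x", OF _ _ _ a y]
  by (auto simp: quot_module_carrier[OF M] quot_module_add_rcos[OF M N] quot_module_smult_rcos[OF M N])

lemma submodule_lincomb_image:
  assumes M: "module R M" and y: "y ` {..<r} \<subseteq> carrier M"
  shows "submodule ((\<lambda>a. lincomb M r a y) ` vecs R r) R M"
proof -
  interpret M: module R M by (rule M)
  let ?Sp = "(\<lambda>a. lincomb M r a y) ` vecs R r"
  show ?thesis
  proof (rule M.submoduleI)
    show "?Sp \<subseteq> carrier M" using lincomb_closed[OF M _ y] by blast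
    have "lincomb M r (\<lambda>i. \<zero>\<^bsub>R\<^esub>) y = \<zero>\<^bsub>M\<^esub>" by (rule lincomb_zero[OF M y])
    then show "\<zero>\<^bsub>M\<^esub> \<in> ?Sp" by (rule image_eqI[OF sym M.zero_vecs])
  next
    fix c x assume c: "c \<in> carrier R" and "x \<in> ?Sp"
    then obtain a where a: "a \<in> vecs R r" "x = lincomb M r a y" by blast
    then have "c \<odot>\<^bsub>M\<^esub> x = lincomb M r (vec_smult R c a) y" using c by (simp add: lincomb_vec_smult[OF M c a(1) y])
    then show "c \<odot>\<^bsub>M\<^esub> x \<in> ?Sp" by (rule image_eqI[OF _ M.vec_smult_vecs[OF c a(1)]])
  next
    fix x x' assume "x \<in> ?Sp" "x' \<in> ?Sp"
    then obtain a b where a: "a \<in> vecs R r" "x = lincomb M r a y"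
      and b: "b \<in> vecs R r" "x' = lincomb M r b y" by blast
    then have "x \<oplus>\<^bsub>M\<^esub> x' = lincomb M r (vec_add R a b) y" by (simp add: lincomb_vec_add[OF M a(1) b(1) y])
    then show "x \<oplus>\<^bsub>M\<^esub> x' \<in> ?Sp" by (rule image_eqI[OF _ M.vec_add_vecs[OF a(1) b(1)]])
  next
    fix x assume "x \<in> ?Sp"
    then obtain a where a: "a \<in> vecs R r" "x = lincomb M r a y" by blast
    have m1: "\<ominus>\<^bsub>R\<^esub> \<one>\<^bsub>R\<^esub> \<in> carrier R" by simp
    have "\<ominus>\<^bsub>M\<^esub> x = lincomb M r (vec_smult R (\<ominus>\<^bsub>R\<^esub> \<one>\<^bsub>R\<^esub>) a) y"
      using a lincomb_closed[OF M a(1) y] by (simp add: lincomb_vec_smult[OF M m1 a(1) y] M.smult_l_minus)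
    then show "\<ominus>\<^bsub>M\<^esub> x \<in> ?Sp" by (rule image_eqI[OF _ M.vec_smult_vecs[OF m1 a(1)]])
  qed
qed

definition vec_linear ::
    "('a, 'c) ring_scheme \<Rightarrow> nat \<Rightarrow> ('a, 'n) module \<Rightarrow> ((nat \<Rightarrow> 'a) \<Rightarrow> 'n) \<Rightarrow> bool" where
  "vec_linear A r N V \<longleftrightarrow> (\<forall>a\<in>vecs A r. V a \<in> carrier N) \<and>
     (\<forall>a\<in>vecs A r. \<forall>b\<in>vecs A r. V (vec_add A a b) = V a \<oplus>\<^bsub>N\<^esub> V b) \<and>
     (\<forall>c\<in>carrier A. \<forall>a\<in>vecs A r. V (vec_smult A c a) = c \<odot>\<^bsub>N\<^esub> V a)"

lemma vec_linear_lincomb: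
  "module A N \<Longrightarrow> y ` {..<r} \<subseteq> carrier N \<Longrightarrow> vec_linear A r N (\<lambda>a. lincomb N r a y)"
  by (simp add: vec_linear_def lincomb_closed lincomb_vec_add lincomb_vec_smult)

lemma vec_linear_diff:
  assumes N: "module A N" and V: "vec_linear A r N V" and a: "a \<in> vecs A r" and b: "b \<in> vecs A r"
  shows "V (vec_add A a (vec_smult A (\<ominus>\<^bsub>A\<^esub> \<one>\<^bsub>A\<^esub>) b)) = V a \<oplus>\<^bsub>N\<^esub> \<ominus>\<^bsub>N\<^esub> V b"
proof -
  interpret N: module A N by (rule N)
  have "V b \<in> carrier N" "vec_smult A (\<ominus>\<^bsub>A\<^esub> \<one>\<^bsub>A\<^esub>) b \<in> vecs A r"
    using V b by (auto simp: vec_linear_def N.vec_smult_vecs)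
  then show ?thesis
    using V a b by (simp add: vec_linear_def N.smult_l_minus)
qed

section \<open>Submodules of \<open>A\<^sup>r\<close> over a Noetherian ring\<close>

definition vec_submodule :: "('a, 'b) ring_scheme \<Rightarrow> nat \<Rightarrow> (nat \<Rightarrow> 'a) set \<Rightarrow> bool" where
  "vec_submodule A r K \<longleftrightarrow> K \<subseteq> vecs A r \<and> (\<lambda>i. \<zero>\<^bsub>A\<^esub>) \<in> K \<and>
     (\<forall>a\<in>K. \<forall>b\<in>K. vec_add A a b \<in> K) \<and> (\<forall>c\<in>carrier A. \<forall>a\<in>K. vec_smult A c a \<in> K)"

context cring
begin

lemma vec_submodule_Int:
  "vec_submodule R r K \<Longrightarrow> vec_submodule R r Q \<Longrightarrow> vec_submodule R r (K \<inter> Q)"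
  by (auto simp: vec_submodule_def)

lemma vec_submodule_Int_vecs:
  "vec_submodule R (Suc r) K \<Longrightarrow> vec_submodule R r (K \<inter> vecs R r)"
  by (auto simp: vec_submodule_def zero_vecs vec_add_vecs vec_smult_vecs)

lemma vec_submodule_kernel:
  assumes N: "module R N" and V: "vec_linear R r N V"
  shows "vec_submodule R r {a \<in> vecs R r. V a = \<zero>\<^bsub>N\<^esub>}"
proof -
  interpret N: module R N by (rule N)
  have "V (vec_smult R \<zero> (\<lambda>i. \<zero>)) = \<zero> \<odot>\<^bsub>N\<^esub> V (\<lambda>i. \<zero>)"
    using V zero_vecs by (simp add: vec_linear_def)
  then have "V (\<lambda>i. \<zero>) = \<zero>\<^bsub>N\<^esub>"
    using V zero_vecs by (simp add: vec_linear_def vec_smult_def)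
  then show ?thesis
    using V by (auto simp: vec_submodule_def vec_linear_def zero_vecs vec_add_vecs vec_smult_vecs)
qed

lemma vec_add_minus_cancel:
  assumes "a \<in> vecs R r" "b \<in> vecs R r"
  shows "vec_add R (vec_add R a (vec_smult R (\<ominus> \<one>) b)) b = a"
    and "vec_add R a (vec_smult R (\<ominus> \<one>) b) i = a i \<ominus> b i"
  using assms by (auto simp: vec_add_def vec_smult_def vecs_carrier l_minus a_minus_def a_assoc l_neg)

lemma vec_submodule_coordinate_ideal:
  assumes K: "vec_submodule R r K"
  shows "ideal ((\<lambda>a. a i) ` K) R"
proof -
  have vecs: "a \<in> vecs R r" "a i \<in> carrier R" if "a \<in> K" for a
    using K that by (auto simp: vec_submodule_def intro: vecs_carrier)
  have smult: "c \<otimes> a i \<in> (\<lambda>a. a i) ` K" if "c \<in> carrier R" "a \<in> K" for c a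
    using K that by (force simp: vec_submodule_def vec_smult_def)
  have "subgroup ((\<lambda>a. a i) ` K) (add_monoid R)"
  proof (rule add.subgroupI)
    show "(\<lambda>a. a i) ` K \<subseteq> carrier R" using vecs by blast
    show "(\<lambda>a. a i) ` K \<noteq> {}" using K by (auto simp: vec_submodule_def)
  next
    fix x assume "x \<in> (\<lambda>a. a i) ` K"
    then show "\<ominus> x \<in> (\<lambda>a. a i) ` K"
      using smult[of "\<ominus> \<one>"] vecs by (auto simp: l_minus)
  next
    fix x y assume "x \<in> (\<lambda>a. a i) ` K" "y \<in> (\<lambda>a. a i) ` K"
    then show "x \<oplus> y \<in> (\<lambda>a. a i) ` K"
      using K by (force simp: vec_submodule_def vec_add_def)
  qed
  then show ?thesis
    by (rule idealI[OF ring_axioms]) (use smult vecs in \<open>auto simp: m_comm\<close>)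
qed

lemma vec_submodule_subset_by_last_coordinate:
  assumes K: "vec_submodule R (Suc r) K" and Q: "vec_submodule R (Suc r) Q"
    and kernel: "K \<inter> vecs R r \<subseteq> Q"
    and image: "(\<lambda>a. a r) ` K \<subseteq> (\<lambda>a. a r) ` (K \<inter> Q)"
  shows "K \<subseteq> Q"
proof
  fix a assume a: "a \<in> K"
  then obtain b where b: "b \<in> K" "b \<in> Q" "b r = a r" using image by force
  define c where "c = vec_add R a (vec_smult R (\<ominus> \<one>) b)"
  have ab: "a \<in> vecs R (Suc r)" "b \<in> vecs R (Suc r)" using K a b by (auto simp: vec_submodule_def)
  have "c \<in> K" unfolding c_def using K a b by (auto simp: vec_submodule_def)
  moreover have "c r = \<zero>" unfolding c_def vec_add_minus_cancel(2)[OF ab]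
    using b(3) ab by (simp add: vecs_carrier)
  ultimately have "c \<in> Q" using kernel K vecs_Suc_iff by (auto simp: vec_submodule_def)
  then have "vec_add R c b \<in> Q" using Q b by (simp add: vec_submodule_def)
  then show "a \<in> Q" unfolding c_def vec_add_minus_cancel(1)[OF ab] .
qed

lemma noetherian_vec_submodule_finite_gen:
  assumes "noetherian_ring R" and "vec_submodule R r K"
  shows "\<exists>F. finite F \<and> F \<subseteq> K \<and> (\<forall>Q. vec_submodule R r Q \<and> F \<subseteq> Q \<longrightarrow> K \<subseteq> Q)"
  using assms(2)
proof (induction r arbitrary: K)
  case 0
  have "a = (\<lambda>i. \<zero>)" if "a \<in> K" for a
    using 0 that by (intro ext) (auto simp: vec_submodule_def vecs_def)
  then have "K \<subseteq> Q" if "vec_submodule R 0 Q" for Q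
    using that by (auto simp: vec_submodule_def)
  then show ?case by (intro exI[of _ "{}"]) simp
next
  case (Suc r)
  obtain F' where F': "finite F'" "F' \<subseteq> K \<inter> vecs R r"
    and gen': "\<forall>Q. vec_submodule R r Q \<and> F' \<subseteq> Q \<longrightarrow> K \<inter> vecs R r \<subseteq> Q"
    using Suc.IH[OF vec_submodule_Int_vecs[OF Suc.prems]] by (elim exE conjE) (rule that)
  obtain G where G: "G \<subseteq> carrier R" "finite G" "(\<lambda>a. a r) ` K = Idl G"
    using noetherian_ring.finetely_gen[OF assms(1) vec_submodule_coordinate_ideal[OF Suc.prems, of r]]
    by (elim exE conjE) (rule that)
  then have "G \<subseteq> (\<lambda>a. a r) ` K" using genideal_self[OF G(1)] by simp
  then have "\<forall>g\<in>G. \<exists>a. a \<in> K \<and> a r = g" by blast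
  from bchoice[OF this] obtain lift where lift: "\<forall>g\<in>G. lift g \<in> K \<and> lift g r = g" ..
  have "K \<subseteq> Q" if Q: "vec_submodule R (Suc r) Q" and FQ: "F' \<union> lift ` G \<subseteq> Q" for Q
  proof (rule vec_submodule_subset_by_last_coordinate[OF Suc.prems Q])
    have "vec_submodule R r (Q \<inter> K \<inter> vecs R r)"
      by (rule vec_submodule_Int_vecs[OF vec_submodule_Int[OF Q Suc.prems]])
    moreover have "F' \<subseteq> Q \<inter> K \<inter> vecs R r" using F'(2) FQ by blast
    ultimately have "K \<inter> vecs R r \<subseteq> Q \<inter> K \<inter> vecs R r" by (rule gen'[rule_format, OF conjI])
    then show "K \<inter> vecs R r \<subseteq> Q" by blast
    have "G \<subseteq> (\<lambda>a. a r) ` (K \<inter> Q)"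
    proof
      fix g assume "g \<in> G"
      then have "lift g \<in> K \<inter> Q" "g = lift g r" using lift FQ by auto
      then show "g \<in> (\<lambda>a. a r) ` (K \<inter> Q)" by (simp add: rev_image_eqI)
    qed
    then show "(\<lambda>a. a r) ` K \<subseteq> (\<lambda>a. a r) ` (K \<inter> Q)"
      unfolding G(3)
      by (rule genideal_minimal[OF vec_submodule_coordinate_ideal[OF vec_submodule_Int[OF Suc.prems Q]]])
  qed
  moreover have "finite (F' \<union> lift ` G)" using F'(1) G(2) by simp
  moreover have "F' \<union> lift ` G \<subseteq> K" using F'(2) lift by blast
  ultimately show ?case by (intro exI[of _ "F' \<union> lift ` G"]) simp
qed

end

section \<open>Finitely generated modules\<close>

locale generated_module =
  fixes A :: "('a, 'c) ring_scheme" and M :: "('a, 'm) module"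
    and r :: nat and xs :: "nat \<Rightarrow> 'm"
  assumes module: "module A M"
    and generators_carrier: "xs ` {..<r} \<subseteq> carrier M"
    and generated: "carrier M = \<Inter>{H. submodule H A M \<and> xs ` {..<r} \<subseteq> H}"
begin

lemma lincomb_generators_surj:
  assumes "x \<in> carrier M"
  shows "\<exists>a\<in>vecs A r. lincomb M r a xs = x"
proof -
  interpret M: module A M by (rule module)
  let ?Sp = "(\<lambda>a. lincomb M r a xs) ` vecs A r"
  have "xs ` {..<r} \<subseteq> ?Sp"
  proof
    fix y assume "y \<in> xs ` {..<r}"
    then obtain j where j: "j < r" "y = xs j" by blast
    have "y = lincomb M r (\<lambda>i. if i = j then \<one>\<^bsub>A\<^esub> else \<zero>\<^bsub>A\<^esub>) xs"
      using lincomb_unit[OF module j(1) generators_carrier] j(2) by simp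
    moreover have "(\<lambda>i. if i = j then \<one>\<^bsub>A\<^esub> else \<zero>\<^bsub>A\<^esub>) \<in> vecs A r"
      using j(1) by (auto simp: vecs_def)
    ultimately show "y \<in> ?Sp" by (rule image_eqI)
  qed
  then have "carrier M \<subseteq> ?Sp"
    using submodule_lincomb_image[OF module generators_carrier]
    by (subst generated, intro Inter_lower) simp
  then show ?thesis using assms by blast
qed

lemma mod_hom_eq_on_generators:
  assumes N: "module A N" and g: "g \<in> mod_hom A M N" and h: "h \<in> mod_hom A M N"
    and eq: "\<And>i. i < r \<Longrightarrow> g (xs i) = h (xs i)"
  shows "g = h"
proof
  fix x
  show "g x = h x"
  proof (cases "x \<in> carrier M")
    case True
    then obtain a where a: "a \<in> vecs A r" "x = lincomb M r a xs"
      using lincomb_generators_surj by (metis (no_types))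
    show ?thesis
      unfolding a(2) using mod_homD[OF g] mod_homD[OF h] generators_carrier eq a(1)
      by (simp add: additive_map_lincomb[OF module N] image_subset_iff)
        (rule lincomb_cong[OF N]; auto)
  next
    case False
    then show ?thesis using mod_homD(2)[OF g] mod_homD(2)[OF h] by (simp add: extensional_def)
  qed
qed

lemma lincomb_eq_if_relations_respected:
  assumes N: "module A N" and z: "z ` {..<r} \<subseteq> carrier N"
    and relations: "\<And>a. a \<in> vecs A r \<Longrightarrow> lincomb M r a xs = \<zero>\<^bsub>M\<^esub> \<Longrightarrow> lincomb N r a z = \<zero>\<^bsub>N\<^esub>"
    and a: "a \<in> vecs A r" and b: "b \<in> vecs A r" and eq: "lincomb M r a xs = lincomb M r b xs"
  shows "lincomb N r a z = lincomb N r b z"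
proof -
  interpret M: module A M by (rule module)
  interpret N: module A N by (rule N)
  note L = vec_linear_lincomb[OF module generators_carrier] and V = vec_linear_lincomb[OF N z]
  define c where "c = vec_add A a (vec_smult A (\<ominus>\<^bsub>A\<^esub> \<one>\<^bsub>A\<^esub>) b)"
  have "c \<in> vecs A r" unfolding c_def using a b by (simp add: M.vec_add_vecs M.vec_smult_vecs)
  moreover have "lincomb M r c xs = \<zero>\<^bsub>M\<^esub>"
    unfolding c_def using a b eq L by (simp add: vec_linear_diff[OF module L] vec_linear_def M.r_neg)
  ultimately have "lincomb N r a z \<oplus>\<^bsub>N\<^esub> \<ominus>\<^bsub>N\<^esub> lincomb N r b z = \<zero>\<^bsub>N\<^esub>"
    using relations vec_linear_diff[OF N V a b] unfolding c_def by simp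
  then show ?thesis using a b V by (simp add: vec_linear_def N.add_minus_eq_zero_iff)
qed

lemma mod_hom_from_generator_images:
  assumes N: "module A N" and z: "z ` {..<r} \<subseteq> carrier N"
    and relations: "\<And>a. a \<in> vecs A r \<Longrightarrow> lincomb M r a xs = \<zero>\<^bsub>M\<^esub> \<Longrightarrow> lincomb N r a z = \<zero>\<^bsub>N\<^esub>"
  shows "\<exists>g\<in>mod_hom A M N. \<forall>i<r. g (xs i) = z i"
proof -
  interpret M: module A M by (rule module)
  note L = vec_linear_lincomb[OF module generators_carrier]
  define V where "V a = lincomb N r a z" for a
  have V: "vec_linear A r N V" unfolding V_def by (rule vec_linear_lincomb[OF N z])
  note well_defined = lincomb_eq_if_relations_respected[OF N z relations, folded V_def]
  define rep where "rep x = (SOME a. a \<in> vecs A r \<and> lincomb M r a xs = x)" for x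
  have rep: "rep x \<in> vecs A r \<and> lincomb M r (rep x) xs = x" if "x \<in> carrier M" for x
    unfolding rep_def using lincomb_generators_surj[OF that] by (rule someI2_bex) blast
  define g where "g = (\<lambda>x\<in>carrier M. V (rep x))"
  have g_lincomb: "g (lincomb M r a xs) = V a" if a: "a \<in> vecs A r" for a
  proof -
    have x: "lincomb M r a xs \<in> carrier M" using L a by (simp add: vec_linear_def)
    then have "V (rep (lincomb M r a xs)) = V a" using rep[OF x] by (intro well_defined a) auto
    then show ?thesis using x by (simp add: g_def)
  qed
  have "g \<in> mod_hom A M N"
  proof (rule mod_homI)
    fix x assume "x \<in> carrier M"
    then show "g x \<in> carrier N" using rep V by (simp add: g_def vec_linear_def)
  next
    fix x y assume "x \<in> carrier M" "y \<in> carrier M"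
    then obtain a b where a: "a \<in> vecs A r" "x = lincomb M r a xs"
      and b: "b \<in> vecs A r" "y = lincomb M r b xs"
      using lincomb_generators_surj by (metis (no_types))
    then have "x \<oplus>\<^bsub>M\<^esub> y = lincomb M r (vec_add A a b) xs" using L by (simp add: vec_linear_def)
    then have "g (x \<oplus>\<^bsub>M\<^esub> y) = V (vec_add A a b)" using a b by (simp add: g_lincomb M.vec_add_vecs)
    then show "g (x \<oplus>\<^bsub>M\<^esub> y) = g x \<oplus>\<^bsub>N\<^esub> g y" using a b V by (simp add: g_lincomb vec_linear_def)
  next
    fix c x assume c: "c \<in> carrier A" and "x \<in> carrier M"
    then obtain a where a: "a \<in> vecs A r" "x = lincomb M r a xs"
      using lincomb_generators_surj by (metis (no_types))
    then have "c \<odot>\<^bsub>M\<^esub> x = lincomb M r (vec_smult A c a) xs" using L c by (simp add: vec_linear_def)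
    then have "g (c \<odot>\<^bsub>M\<^esub> x) = V (vec_smult A c a)" using a c by (simp add: g_lincomb M.vec_smult_vecs)
    then show "g (c \<odot>\<^bsub>M\<^esub> x) = c \<odot>\<^bsub>N\<^esub> g x" using a c V by (simp add: g_lincomb vec_linear_def)
  qed (simp add: g_def)
  moreover have "g (xs i) = z i" if i: "i < r" for i
  proof -
    have "(\<lambda>k. if k = i then \<one>\<^bsub>A\<^esub> else \<zero>\<^bsub>A\<^esub>) \<in> vecs A r" using i by (auto simp: vecs_def)
    from g_lincomb[OF this] show ?thesis
      unfolding V_def lincomb_unit[OF module i generators_carrier] lincomb_unit[OF N i z] .
  qed
  ultimately show ?thesis by blast
qed

end

section \<open>Products modulo direct sums\<close>

abbreviation prod_mod_dsum :: "('a, 'c) ring_scheme \<Rightarrow> (nat \<Rightarrow> ('a, 'n) module) \<Rightarrow> ('a, (nat \<Rightarrow> 'n) set) module"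
  where "prod_mod_dsum A N \<equiv> quot_module A (prod_module A N) (dsum_set N)"

lemma module_prod_mod_dsum:
  assumes "\<And>n. module A (N n)"
  shows "module A (prod_mod_dsum A N)"
  by (rule module_quot_module[OF module_prod_module submodule_dsum_set]) (use assms in auto)

lemma dsum_rcos_eq_iff:
  assumes N: "\<And>n. module A (N n)"
    and p: "p \<in> carrier (prod_module A N)" and q: "q \<in> carrier (prod_module A N)"
  shows "dsum_set N +>\<^bsub>prod_module A N\<^esub> p = dsum_set N +>\<^bsub>prod_module A N\<^esub> q \<longleftrightarrow>
    finite {n. p n \<noteq> q n}"
proof -
  have G: "\<And>n. abelian_group (N n)" using N module.axioms(2) by blast
  have pq: "\<And>n. p n \<in> carrier (N n)" "\<And>n. q n \<in> carrier (N n)"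
    using p q by (auto simp: prod_module_simps)
  have diff: "p n \<oplus>\<^bsub>N n\<^esub> \<ominus>\<^bsub>N n\<^esub> q n \<in> carrier (N n) \<and>
      (p n \<oplus>\<^bsub>N n\<^esub> \<ominus>\<^bsub>N n\<^esub> q n = \<zero>\<^bsub>N n\<^esub> \<longleftrightarrow> p n = q n)" for n
  proof -
    interpret abelian_group "N n" by (rule G)
    show ?thesis using pq(1)[of n] pq(2)[of n] by (simp add: add_minus_eq_zero_iff)
  qed
  have "dsum_set N +>\<^bsub>prod_module A N\<^esub> p = dsum_set N +>\<^bsub>prod_module A N\<^esub> q \<longleftrightarrow>
      (\<lambda>n. p n \<oplus>\<^bsub>N n\<^esub> \<ominus>\<^bsub>N n\<^esub> q n) \<in> dsum_set N"
    using quot_module_rcos_eq_iff[OF module_prod_module[OF N] submodule_dsum_set[OF N] p q]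
    by (simp add: prod_module_a_inv[OF N q] prod_module_simps)
  also have "\<dots> \<longleftrightarrow> finite {n. p n \<noteq> q n}"
    using diff by (simp add: dsum_set_def)
  finally show ?thesis .
qed

lemma prod_module_lincomb_apply:
  assumes N: "\<And>n. module A (N n)" and a: "a \<in> vecs A r"
    and p: "p ` {..<r} \<subseteq> carrier (prod_module A N)"
  shows "lincomb (prod_module A N) r a p n = lincomb (N n) r a (\<lambda>i. p i n)"
  using additive_map_lincomb[OF module_prod_module[OF N] N, where h = "\<lambda>f. f n", OF _ _ _ a p]
  by (simp add: prod_module_simps)

definition coset_hom ::
    "('a, 'c) ring_scheme \<Rightarrow> ('a, 'm) module \<Rightarrow> (nat \<Rightarrow> ('a, 'n) module) \<Rightarrow> (nat \<Rightarrow> 'm \<Rightarrow> 'n) \<Rightarrow>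
      'm \<Rightarrow> (nat \<Rightarrow> 'n) set" where
  "coset_hom A M N g = (\<lambda>x\<in>carrier M. dsum_set N +>\<^bsub>prod_module A N\<^esub> (\<lambda>n. g n x))"

lemma coset_hom_mod_hom:
  assumes M: "module A M" and N: "\<And>n. module A (N n)" and g: "\<And>n. g n \<in> mod_hom A M (N n)"
  shows "coset_hom A M N g \<in> mod_hom A M (prod_mod_dsum A N)"
proof -
  interpret M: module A M by (rule M)
  note P = module_prod_module[OF N] and S = submodule_dsum_set[OF N]
  have gx: "(\<lambda>n. g n x) \<in> carrier (prod_module A N)" if "x \<in> carrier M" for x
    using mod_homD(1)[OF g that] by (simp add: prod_module_simps)
  show ?thesis
  proof (rule mod_homI)
    fix x y assume "x \<in> carrier M" "y \<in> carrier M"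
    then show "coset_hom A M N g (x \<oplus>\<^bsub>M\<^esub> y) =
        coset_hom A M N g x \<oplus>\<^bsub>prod_mod_dsum A N\<^esub> coset_hom A M N g y"
      using gx mod_homD(3)[OF g]
      by (simp add: coset_hom_def quot_module_add_rcos[OF P S] prod_module_simps)
  next
    fix c x assume "c \<in> carrier A" "x \<in> carrier M"
    then show "coset_hom A M N g (c \<odot>\<^bsub>M\<^esub> x) = c \<odot>\<^bsub>prod_mod_dsum A N\<^esub> coset_hom A M N g x"
      using gx mod_homD(4)[OF g]
      by (simp add: coset_hom_def quot_module_smult_rcos[OF P S] prod_module_simps)
  qed (use gx in \<open>auto simp: coset_hom_def quot_module_carrier[OF P]\<close>)
qed

lemma coset_hom_eq_if_finite:
  assumes N: "\<And>n. module A (N n)"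
    and g: "\<And>n. g n \<in> mod_hom A M (N n)" and h: "\<And>n. h n \<in> mod_hom A M (N n)"
    and finite: "finite {n. g n \<noteq> h n}"
  shows "coset_hom A M N g = coset_hom A M N h"
proof
  fix x
  show "coset_hom A M N g x = coset_hom A M N h x"
  proof (cases "x \<in> carrier M")
    case True
    have "finite {n. g n x \<noteq> h n x}" by (rule finite_subset[OF _ finite]) auto
    then show ?thesis
      using True mod_homD(1)[OF g] mod_homD(1)[OF h]
      by (simp add: coset_hom_def dsum_rcos_eq_iff[OF N] prod_module_simps)
  qed (simp add: coset_hom_def)
qed

lemma coset_hom_add:
  assumes N: "\<And>n. module A (N n)"
    and g: "g \<in> carrier (prod_module A (\<lambda>n. Hom_module A M (N n)))"
    and h: "h \<in> carrier (prod_module A (\<lambda>n. Hom_module A M (N n)))"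
  shows "coset_hom A M N (g \<oplus>\<^bsub>prod_module A (\<lambda>n. Hom_module A M (N n))\<^esub> h) =
    coset_hom A M N g \<oplus>\<^bsub>Hom_module A M (prod_mod_dsum A N)\<^esub> coset_hom A M N h"
  unfolding coset_hom_def Hom_module_simps
proof (rule restrict_ext)
  fix x assume "x \<in> carrier M"
  then have "(\<lambda>n. g n x) \<in> carrier (prod_module A N)" "(\<lambda>n. h n x) \<in> carrier (prod_module A N)"
    using g h mod_homD(1) by (fastforce simp: prod_module_simps Hom_module_simps)+
  then show "dsum_set N +>\<^bsub>prod_module A N\<^esub>
        (\<lambda>n. (g \<oplus>\<^bsub>prod_module A (\<lambda>n. Hom_module A M (N n))\<^esub> h) n x) =
      (\<lambda>x\<in>carrier M. dsum_set N +>\<^bsub>prod_module A N\<^esub> (\<lambda>n. g n x)) x \<oplus>\<^bsub>prod_mod_dsum A N\<^esub>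
      (\<lambda>x\<in>carrier M. dsum_set N +>\<^bsub>prod_module A N\<^esub> (\<lambda>n. h n x)) x"
    using \<open>x \<in> carrier M\<close>
    by (simp add: prod_module_simps Hom_module_simps
        quot_module_add_rcos[OF module_prod_module[OF N] submodule_dsum_set[OF N]])
qed

lemma coset_hom_smult:
  assumes N: "\<And>n. module A (N n)" and c: "c \<in> carrier A"
    and g: "g \<in> carrier (prod_module A (\<lambda>n. Hom_module A M (N n)))"
  shows "coset_hom A M N (c \<odot>\<^bsub>prod_module A (\<lambda>n. Hom_module A M (N n))\<^esub> g) =
    c \<odot>\<^bsub>Hom_module A M (prod_mod_dsum A N)\<^esub> coset_hom A M N g"
  unfolding coset_hom_def Hom_module_simps
proof (rule restrict_ext)
  fix x assume "x \<in> carrier M"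
  then have "(\<lambda>n. g n x) \<in> carrier (prod_module A N)"
    using g mod_homD(1) by (fastforce simp: prod_module_simps Hom_module_simps)
  then show "dsum_set N +>\<^bsub>prod_module A N\<^esub>
        (\<lambda>n. (c \<odot>\<^bsub>prod_module A (\<lambda>n. Hom_module A M (N n))\<^esub> g) n x) =
      c \<odot>\<^bsub>prod_mod_dsum A N\<^esub> (\<lambda>x\<in>carrier M. dsum_set N +>\<^bsub>prod_module A N\<^esub> (\<lambda>n. g n x)) x"
    using \<open>x \<in> carrier M\<close> c
    by (simp add: prod_module_simps Hom_module_simps
        quot_module_smult_rcos[OF module_prod_module[OF N] submodule_dsum_set[OF N]])
qed

context generated_module
begin

lemma coset_hom_eq_iff:
  assumes N: "\<And>n. module A (N n)"
    and g: "\<And>n. g n \<in> mod_hom A M (N n)" and h: "\<And>n. h n \<in> mod_hom A M (N n)"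
  shows "coset_hom A M N g = coset_hom A M N h \<longleftrightarrow> finite {n. g n \<noteq> h n}"
proof
  assume eq: "coset_hom A M N g = coset_hom A M N h"
  have "finite {n. g n (xs i) \<noteq> h n (xs i)}" if "i < r" for i
  proof -
    have "xs i \<in> carrier M" using generators_carrier that by blast
    then show ?thesis
      using fun_cong[OF eq, of "xs i"] mod_homD(1)[OF g] mod_homD(1)[OF h]
      by (simp add: coset_hom_def dsum_rcos_eq_iff[OF N] prod_module_simps)
  qed
  then have "finite (\<Union>i<r. {n. g n (xs i) \<noteq> h n (xs i)})" by simp
  moreover have "{n. g n \<noteq> h n} \<subseteq> (\<Union>i<r. {n. g n (xs i) \<noteq> h n (xs i)})"
  proof
    fix n assume "n \<in> {n. g n \<noteq> h n}"
    then have "\<not> (\<forall>i<r. g n (xs i) = h n (xs i))" using mod_hom_eq_on_generators[OF N g h] by auto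
    then show "n \<in> (\<Union>i<r. {n. g n (xs i) \<noteq> h n (xs i)})" by auto
  qed
  ultimately show "finite {n. g n \<noteq> h n}" by (rule finite_subset[rotated])
qed (rule coset_hom_eq_if_finite[OF N g h])

text \<open>The relations form a finitely generated submodule of \<open>A\<^sup>r\<close>, and the images of
  finitely many generators have finite support.\<close>

lemma relations_into_dsum_finite_correction:
  assumes A: "noetherian_ring A" and N: "\<And>n. module A (N n)"
    and p: "p ` {..<r} \<subseteq> carrier (prod_module A N)"
    and into_dsum: "\<And>a. a \<in> vecs A r \<Longrightarrow> lincomb M r a xs = \<zero>\<^bsub>M\<^esub> \<Longrightarrow>
      lincomb (prod_module A N) r a p \<in> dsum_set N"
  shows "\<exists>q. q ` {..<r} \<subseteq> carrier (prod_module A N) \<and> (\<forall>i<r. finite {n. q i n \<noteq> p i n}) \<and>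
    (\<forall>a\<in>vecs A r. lincomb M r a xs = \<zero>\<^bsub>M\<^esub> \<longrightarrow> lincomb (prod_module A N) r a q = \<zero>\<^bsub>prod_module A N\<^esub>)"
proof -
  interpret M: module A M by (rule module)
  note P = module_prod_module[OF N]
  define K where "K = {a \<in> vecs A r. lincomb M r a xs = \<zero>\<^bsub>M\<^esub>}"
  have "vec_submodule A r K"
    unfolding K_def by (rule M.vec_submodule_kernel[OF module vec_linear_lincomb[OF module generators_carrier]])
  then obtain F where F: "finite F" "F \<subseteq> K"
    and gen: "\<forall>Q. vec_submodule A r Q \<and> F \<subseteq> Q \<longrightarrow> K \<subseteq> Q"
    by (elim M.noetherian_vec_submodule_finite_gen[OF A, THEN exE] conjE) (rule that)
  define D where "D = (\<Union>a\<in>F. {n. lincomb (prod_module A N) r a p n \<noteq> \<zero>\<^bsub>N n\<^esub>})"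
  have "finite D" unfolding D_def using F into_dsum by (auto simp: K_def dsum_set_def)
  define q where "q i = (\<lambda>n. if n \<in> D then \<zero>\<^bsub>N n\<^esub> else p i n)" for i
  have q: "q ` {..<r} \<subseteq> carrier (prod_module A N)"
    using p abelian_monoid.zero_closed[OF abelian_group.axioms(1)[OF module.axioms(2)[OF N]]]
    by (auto simp: q_def prod_module_simps)
  have q_apply: "lincomb (prod_module A N) r a q n =
      (if n \<in> D then \<zero>\<^bsub>N n\<^esub> else lincomb (prod_module A N) r a p n)" if "a \<in> vecs A r" for a n
    using that p q
    by (simp add: prod_module_lincomb_apply[OF N] q_def lincomb_zero_right[OF N] cong: if_cong)
  have "vec_submodule A r {a \<in> vecs A r. lincomb (prod_module A N) r a q = \<zero>\<^bsub>prod_module A N\<^esub>}"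
    by (rule M.vec_submodule_kernel[OF P vec_linear_lincomb[OF P q]])
  moreover have "F \<subseteq> {a \<in> vecs A r. lincomb (prod_module A N) r a q = \<zero>\<^bsub>prod_module A N\<^esub>}"
  proof
    fix a assume "a \<in> F"
    then have a: "a \<in> vecs A r" using F by (auto simp: K_def)
    have "lincomb (prod_module A N) r a q n = \<zero>\<^bsub>N n\<^esub>" for n
      using q_apply[OF a, of n] \<open>a \<in> F\<close> by (auto simp: D_def)
    then show "a \<in> {a \<in> vecs A r. lincomb (prod_module A N) r a q = \<zero>\<^bsub>prod_module A N\<^esub>}"
      using a by (auto simp: prod_module_simps)
  qed
  ultimately have "K \<subseteq> {a \<in> vecs A r. lincomb (prod_module A N) r a q = \<zero>\<^bsub>prod_module A N\<^esub>}"
    by (rule gen[rule_format, OF conjI])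
  moreover have "finite {n. q i n \<noteq> p i n}" for i
    using \<open>finite D\<close> by (rule finite_subset[rotated]) (auto simp: q_def)
  ultimately show ?thesis using q by (auto simp: K_def)
qed

lemma relations_lift_into_dsum:
  assumes N: "\<And>n. module A (N n)" and f: "f \<in> mod_hom A M (prod_mod_dsum A N)"
    and p: "p ` {..<r} \<subseteq> carrier (prod_module A N)"
    and lift: "\<And>i. i < r \<Longrightarrow> f (xs i) = dsum_set N +>\<^bsub>prod_module A N\<^esub> p i"
    and a: "a \<in> vecs A r" and relation: "lincomb M r a xs = \<zero>\<^bsub>M\<^esub>"
  shows "lincomb (prod_module A N) r a p \<in> dsum_set N"
proof -
  note P = module_prod_module[OF N] and S = submodule_dsum_set[OF N]
    and PS = module_prod_mod_dsum[OF N]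
  have p_rcos: "(\<lambda>i. dsum_set N +>\<^bsub>prod_module A N\<^esub> p i) ` {..<r} \<subseteq> carrier (prod_mod_dsum A N)"
    using p by (auto simp: quot_module_carrier[OF P])
  have "dsum_set N +>\<^bsub>prod_module A N\<^esub> lincomb (prod_module A N) r a p =
      lincomb (prod_mod_dsum A N) r a (\<lambda>i. dsum_set N +>\<^bsub>prod_module A N\<^esub> p i)"
    by (rule quot_module_lincomb[OF P S a p])
  also have "\<dots> = lincomb (prod_mod_dsum A N) r a (\<lambda>i. f (xs i))"
    by (rule lincomb_cong[OF PS a p_rcos]) (simp add: lift)
  also have "\<dots> = f (lincomb M r a xs)"
    by (rule additive_map_lincomb[OF module PS mod_homD(1,3,4)[OF f] a generators_carrier, symmetric])
  also have "\<dots> = dsum_set N"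
    using relation mod_hom_zero[OF module PS f] by (simp add: quot_module_simps)
  finally have "dsum_set N +>\<^bsub>prod_module A N\<^esub> lincomb (prod_module A N) r a p = dsum_set N" .
  moreover have "lincomb (prod_module A N) r a p \<in> carrier (prod_module A N)"
    by (rule lincomb_closed[OF P a p])
  then have "lincomb (prod_module A N) r a p \<in>
      dsum_set N +>\<^bsub>prod_module A N\<^esub> lincomb (prod_module A N) r a p"
    by (rule abelian_subgroup.a_rcos_self[OF submodule_abelian_subgroup[OF P S]])
  ultimately show ?thesis by simp
qed

lemma homs_from_prod_generator_images:
  assumes N: "\<And>n. module A (N n)" and q: "q ` {..<r} \<subseteq> carrier (prod_module A N)"
    and relations: "\<And>a. a \<in> vecs A r \<Longrightarrow> lincomb M r a xs = \<zero>\<^bsub>M\<^esub> \<Longrightarrow>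
      lincomb (prod_module A N) r a q = \<zero>\<^bsub>prod_module A N\<^esub>"
  shows "\<exists>g. (\<forall>n. g n \<in> mod_hom A M (N n)) \<and> (\<forall>n i. i < r \<longrightarrow> g n (xs i) = q i n)"
proof -
  have "\<exists>h\<in>mod_hom A M (N n). \<forall>i<r. h (xs i) = q i n" for n
  proof (rule mod_hom_from_generator_images[OF N])
    show "(\<lambda>i. q i n) ` {..<r} \<subseteq> carrier (N n)" using q by (auto simp: prod_module_simps)
    fix a assume a: "a \<in> vecs A r" and "lincomb M r a xs = \<zero>\<^bsub>M\<^esub>"
    then have "lincomb (prod_module A N) r a q n = \<zero>\<^bsub>N n\<^esub>"
      using relations by (simp add: prod_module_simps)
    then show "lincomb (N n) r a (\<lambda>i. q i n) = \<zero>\<^bsub>N n\<^esub>"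
      by (simp add: prod_module_lincomb_apply[OF N a q])
  qed
  then have "\<forall>n. \<exists>h. h \<in> mod_hom A M (N n) \<and> (\<forall>i<r. h (xs i) = q i n)" by blast
  from choice[OF this] show ?thesis by blast
qed

lemma coset_hom_surj:
  assumes A: "noetherian_ring A" and N: "\<And>n. module A (N n)"
    and f: "f \<in> mod_hom A M (prod_mod_dsum A N)"
  shows "\<exists>g. (\<forall>n. g n \<in> mod_hom A M (N n)) \<and> coset_hom A M N g = f"
proof -
  note P = module_prod_module[OF N] and PS = module_prod_mod_dsum[OF N]
  have "f (xs i) \<in> carrier (prod_mod_dsum A N)" if "i < r" for i
    using mod_homD(1)[OF f] generators_carrier that by blast
  then have "\<forall>i\<in>{..<r}. \<exists>v. v \<in> carrier (prod_module A N) \<and> f (xs i) = dsum_set N +>\<^bsub>prod_module A N\<^esub> v"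
    unfolding quot_module_carrier[OF P] by blast
  from bchoice[OF this] obtain p
    where p: "\<forall>i\<in>{..<r}. p i \<in> carrier (prod_module A N) \<and> f (xs i) = dsum_set N +>\<^bsub>prod_module A N\<^esub> p i" ..
  then have p_carrier: "p ` {..<r} \<subseteq> carrier (prod_module A N)"
    and lift: "\<And>i. i < r \<Longrightarrow> f (xs i) = dsum_set N +>\<^bsub>prod_module A N\<^esub> p i" by auto
  have into_dsum: "\<And>a. a \<in> vecs A r \<Longrightarrow> lincomb M r a xs = \<zero>\<^bsub>M\<^esub> \<Longrightarrow>
      lincomb (prod_module A N) r a p \<in> dsum_set N"
    by (rule relations_lift_into_dsum[OF N f p_carrier lift])
  obtain q where q: "q ` {..<r} \<subseteq> carrier (prod_module A N)" "\<forall>i<r. finite {n. q i n \<noteq> p i n}"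
    and q_relations: "\<forall>a\<in>vecs A r. lincomb M r a xs = \<zero>\<^bsub>M\<^esub> \<longrightarrow>
      lincomb (prod_module A N) r a q = \<zero>\<^bsub>prod_module A N\<^esub>"
  proof -
    have "\<exists>q. q ` {..<r} \<subseteq> carrier (prod_module A N) \<and> (\<forall>i<r. finite {n. q i n \<noteq> p i n}) \<and>
      (\<forall>a\<in>vecs A r. lincomb M r a xs = \<zero>\<^bsub>M\<^esub> \<longrightarrow>
        lincomb (prod_module A N) r a q = \<zero>\<^bsub>prod_module A N\<^esub>)"
      by (rule relations_into_dsum_finite_correction[OF A N p_carrier]) (rule into_dsum)
    then show ?thesis by (elim exE conjE) (rule that)
  qed
  obtain g where g: "\<And>n. g n \<in> mod_hom A M (N n)" and g_xs: "\<And>n i. i < r \<Longrightarrow> g n (xs i) = q i n"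
    using homs_from_prod_generator_images[where N = N, OF N q(1)] q_relations by blast
  have "coset_hom A M N g = f"
  proof (rule mod_hom_eq_on_generators[OF PS coset_hom_mod_hom[OF module N g] f])
    fix i assume i: "i < r"
    then have "coset_hom A M N g (xs i) = dsum_set N +>\<^bsub>prod_module A N\<^esub> q i"
      using g_xs generators_carrier by (auto simp: coset_hom_def)
    also have "\<dots> = dsum_set N +>\<^bsub>prod_module A N\<^esub> p i"
      using i q p_carrier by (subst dsum_rcos_eq_iff[OF N]) auto
    also have "\<dots> = f (xs i)" using p i by simp
    finally show "coset_hom A M N g (xs i) = f (xs i)" .
  qed
  then show ?thesis using g by blast
qed

end

definition dsum_coset_map ::
    "('a, 'c) ring_scheme \<Rightarrow> (nat \<Rightarrow> ('a, 'n) module) \<Rightarrow> (nat \<Rightarrow> 'w \<Rightarrow> 'n) \<Rightarrow> (nat \<Rightarrow> 'w) \<Rightarrow>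
      (nat \<Rightarrow> 'n) set" where
  "dsum_coset_map A N \<phi> g = dsum_set N +>\<^bsub>prod_module A N\<^esub> (\<lambda>n. \<phi> n (g n))"

context
  fixes A :: "('a, 'c) ring_scheme" and W :: "nat \<Rightarrow> ('a, 'w) module"
    and N :: "nat \<Rightarrow> ('a, 'n) module" and \<phi> :: "nat \<Rightarrow> 'w \<Rightarrow> 'n"
  assumes N: "\<And>n. module A (N n)" and \<phi>: "\<And>n. \<phi> n \<in> mod_hom A (W n) (N n)"
    and \<phi>_bij: "\<And>n. bij_betw (\<phi> n) (carrier (W n)) (carrier (N n))"
begin

lemma dsum_coset_map_carrier:
  "g \<in> carrier (prod_module A W) \<Longrightarrow> (\<lambda>n. \<phi> n (g n)) \<in> carrier (prod_module A N)"
  using mod_homD(1)[OF \<phi>] by (simp add: prod_module_simps)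

lemma dsum_coset_map_surj:
  "dsum_coset_map A N \<phi> ` carrier (prod_module A W) = carrier (prod_mod_dsum A N)"
proof
  show "dsum_coset_map A N \<phi> ` carrier (prod_module A W) \<subseteq> carrier (prod_mod_dsum A N)"
    using dsum_coset_map_carrier
    by (auto simp: dsum_coset_map_def quot_module_carrier[OF module_prod_module[OF N]])
  show "carrier (prod_mod_dsum A N) \<subseteq> dsum_coset_map A N \<phi> ` carrier (prod_module A W)"
  proof
    fix Y assume "Y \<in> carrier (prod_mod_dsum A N)"
    then obtain p where p: "p \<in> carrier (prod_module A N)" "Y = dsum_set N +>\<^bsub>prod_module A N\<^esub> p"
      by (auto simp: quot_module_carrier[OF module_prod_module[OF N]])
    define g where "g n = inv_into (carrier (W n)) (\<phi> n) (p n)" for n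
    have "p n \<in> \<phi> n ` carrier (W n)" for n
      using p(1) bij_betw_imp_surj_on[OF \<phi>_bij] by (auto simp: prod_module_simps)
    then have "g \<in> carrier (prod_module A W)" "(\<lambda>n. \<phi> n (g n)) = p"
      by (auto simp: g_def prod_module_simps inv_into_into f_inv_into_f)
    then show "Y \<in> dsum_coset_map A N \<phi> ` carrier (prod_module A W)"
      using p(2) by (auto simp: dsum_coset_map_def)
  qed
qed

lemma dsum_coset_map_eq_iff:
  assumes g: "g \<in> carrier (prod_module A W)" and h: "h \<in> carrier (prod_module A W)"
  shows "dsum_coset_map A N \<phi> g = dsum_coset_map A N \<phi> h \<longleftrightarrow> finite {n. g n \<noteq> h n}"
proof -
  have "{n. \<phi> n (g n) \<noteq> \<phi> n (h n)} = {n. g n \<noteq> h n}"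
    using g h bij_betw_imp_inj_on[OF \<phi>_bij] by (auto simp: prod_module_simps dest: inj_onD)
  then show ?thesis
    by (simp add: dsum_coset_map_def dsum_rcos_eq_iff[OF N dsum_coset_map_carrier[OF g]
          dsum_coset_map_carrier[OF h]])
qed

lemma dsum_coset_map_add:
  assumes g: "g \<in> carrier (prod_module A W)" and h: "h \<in> carrier (prod_module A W)"
  shows "dsum_coset_map A N \<phi> (g \<oplus>\<^bsub>prod_module A W\<^esub> h) =
    dsum_coset_map A N \<phi> g \<oplus>\<^bsub>prod_mod_dsum A N\<^esub> dsum_coset_map A N \<phi> h"
proof -
  have "dsum_coset_map A N \<phi> g \<oplus>\<^bsub>prod_mod_dsum A N\<^esub> dsum_coset_map A N \<phi> h =
      dsum_set N +>\<^bsub>prod_module A N\<^esub> ((\<lambda>n. \<phi> n (g n)) \<oplus>\<^bsub>prod_module A N\<^esub> (\<lambda>n. \<phi> n (h n)))"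
    unfolding dsum_coset_map_def
    by (rule quot_module_add_rcos[OF module_prod_module[OF N] submodule_dsum_set[OF N]
          dsum_coset_map_carrier[OF g] dsum_coset_map_carrier[OF h]])
  then show ?thesis
    using g h mod_homD(3)[OF \<phi>] by (simp add: dsum_coset_map_def prod_module_simps)
qed

lemma dsum_coset_map_smult:
  assumes c: "c \<in> carrier A" and g: "g \<in> carrier (prod_module A W)"
  shows "dsum_coset_map A N \<phi> (c \<odot>\<^bsub>prod_module A W\<^esub> g) = c \<odot>\<^bsub>prod_mod_dsum A N\<^esub> dsum_coset_map A N \<phi> g"
proof -
  have "c \<odot>\<^bsub>prod_mod_dsum A N\<^esub> dsum_coset_map A N \<phi> g =
      dsum_set N +>\<^bsub>prod_module A N\<^esub> (c \<odot>\<^bsub>prod_module A N\<^esub> (\<lambda>n. \<phi> n (g n)))"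
    unfolding dsum_coset_map_def
    by (rule quot_module_smult_rcos[OF module_prod_module[OF N] submodule_dsum_set[OF N]
          c dsum_coset_map_carrier[OF g]])
  then show ?thesis
    using c g mod_homD(4)[OF \<phi>] by (simp add: dsum_coset_map_def prod_module_simps)
qed

end

lemma mod_isomorphicI_same_fibres:
  fixes W :: "('a, 'w) module" and Y :: "('a, 'y) module" and Z :: "('a, 'z) module"
  assumes \<Phi>_onto: "\<Phi> ` carrier W = carrier Y" and \<Theta>_onto: "\<Theta> ` carrier W = carrier Z"
    and same_fibres: "\<And>u v. u \<in> carrier W \<Longrightarrow> v \<in> carrier W \<Longrightarrow> \<Phi> u = \<Phi> v \<longleftrightarrow> \<Theta> u = \<Theta> v"
    and W_add: "\<And>u v. u \<in> carrier W \<Longrightarrow> v \<in> carrier W \<Longrightarrow> u \<oplus>\<^bsub>W\<^esub> v \<in> carrier W"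
    and W_smult: "\<And>c u. c \<in> carrier A \<Longrightarrow> u \<in> carrier W \<Longrightarrow> c \<odot>\<^bsub>W\<^esub> u \<in> carrier W"
    and \<Phi>_add: "\<And>u v. u \<in> carrier W \<Longrightarrow> v \<in> carrier W \<Longrightarrow> \<Phi> (u \<oplus>\<^bsub>W\<^esub> v) = \<Phi> u \<oplus>\<^bsub>Y\<^esub> \<Phi> v"
    and \<Theta>_add: "\<And>u v. u \<in> carrier W \<Longrightarrow> v \<in> carrier W \<Longrightarrow> \<Theta> (u \<oplus>\<^bsub>W\<^esub> v) = \<Theta> u \<oplus>\<^bsub>Z\<^esub> \<Theta> v"
    and \<Phi>_smult: "\<And>c u. c \<in> carrier A \<Longrightarrow> u \<in> carrier W \<Longrightarrow> \<Phi> (c \<odot>\<^bsub>W\<^esub> u) = c \<odot>\<^bsub>Y\<^esub> \<Phi> u"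
    and \<Theta>_smult: "\<And>c u. c \<in> carrier A \<Longrightarrow> u \<in> carrier W \<Longrightarrow> \<Theta> (c \<odot>\<^bsub>W\<^esub> u) = c \<odot>\<^bsub>Z\<^esub> \<Theta> u"
  shows "mod_isomorphic A Y Z"
proof -
  define \<Psi> where "\<Psi> = (\<lambda>y\<in>carrier Y. \<Theta> (inv_into (carrier W) \<Phi> y))"
  have \<Psi>_\<Phi>: "\<Psi> (\<Phi> u) = \<Theta> u" if u: "u \<in> carrier W" for u
  proof -
    have "\<Phi> u \<in> \<Phi> ` carrier W" using u by blast
    then have "inv_into (carrier W) \<Phi> (\<Phi> u) \<in> carrier W" "\<Phi> (inv_into (carrier W) \<Phi> (\<Phi> u)) = \<Phi> u"
      by (simp_all add: inv_into_into f_inv_into_f)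
    then show ?thesis using u same_fibres \<Phi>_onto by (auto simp: \<Psi>_def)
  qed
  have Y_cases: "\<exists>u\<in>carrier W. y = \<Phi> u" if "y \<in> carrier Y" for y
    using that \<Phi>_onto by blast
  have "\<Psi> \<in> mod_hom A Y Z"
  proof (rule mod_homI)
    fix y assume "y \<in> carrier Y"
    then show "\<Psi> y \<in> carrier Z" using Y_cases \<Psi>_\<Phi> \<Theta>_onto by auto
  next
    fix y y' assume "y \<in> carrier Y" "y' \<in> carrier Y"
    then obtain u u' where "u \<in> carrier W" "u' \<in> carrier W" "y = \<Phi> u" "y' = \<Phi> u'"
      using Y_cases by blast
    then show "\<Psi> (y \<oplus>\<^bsub>Y\<^esub> y') = \<Psi> y \<oplus>\<^bsub>Z\<^esub> \<Psi> y'"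
      using \<Psi>_\<Phi> W_add by (simp flip: \<Phi>_add add: \<Theta>_add)
  next
    fix c y assume "c \<in> carrier A" "y \<in> carrier Y"
    then obtain u where "u \<in> carrier W" "y = \<Phi> u" using Y_cases by blast
    then show "\<Psi> (c \<odot>\<^bsub>Y\<^esub> y) = c \<odot>\<^bsub>Z\<^esub> \<Psi> y"
      using \<open>c \<in> carrier A\<close> \<Psi>_\<Phi> W_smult by (simp flip: \<Phi>_smult add: \<Theta>_smult)
  qed (simp add: \<Psi>_def)
  moreover have "bij_betw \<Psi> (carrier Y) (carrier Z)"
  proof (rule bij_betw_imageI)
    show "inj_on \<Psi> (carrier Y)"
    proof (rule inj_onI)
      fix y y' assume "y \<in> carrier Y" "y' \<in> carrier Y" "\<Psi> y = \<Psi> y'"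
      then show "y = y'" using Y_cases \<Psi>_\<Phi> same_fibres by metis
    qed
    have "\<Psi> ` carrier Y = (\<lambda>u. \<Psi> (\<Phi> u)) ` carrier W" unfolding \<Phi>_onto[symmetric] image_image ..
    also have "\<dots> = \<Theta> ` carrier W" using \<Psi>_\<Phi> by (rule image_cong[OF refl])
    finally show "\<Psi> ` carrier Y = carrier Z" using \<Theta>_onto by simp
  qed
  ultimately show ?thesis unfolding mod_isomorphic_def by blast
qed

lemma (in generated_module) Hom_prod_mod_dsum_isomorphic:
  assumes A: "noetherian_ring A" and N: "\<And>n. module A (N n)" and N': "\<And>n. module A (N' n)"
    and iso: "\<And>n. mod_isomorphic A (Hom_module A M (N n)) (N' n)"
  shows "mod_isomorphic A (Hom_module A M (prod_mod_dsum A N)) (prod_mod_dsum A N')"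
proof -
  have "\<forall>n. \<exists>\<phi>. \<phi> \<in> mod_hom A (Hom_module A M (N n)) (N' n) \<and>
      bij_betw \<phi> (carrier (Hom_module A M (N n))) (carrier (N' n))"
    using iso unfolding mod_isomorphic_def by blast
  from choice[OF this] obtain \<phi> where \<phi>: "\<And>n. \<phi> n \<in> mod_hom A (Hom_module A M (N n)) (N' n)"
    and \<phi>_bij: "\<And>n. bij_betw (\<phi> n) (carrier (Hom_module A M (N n))) (carrier (N' n))" by blast
  let ?W = "prod_module A (\<lambda>n. Hom_module A M (N n))"
  have W: "g \<in> carrier ?W \<longleftrightarrow> (\<forall>n. g n \<in> mod_hom A M (N n))" for g
    by (simp add: prod_module_simps Hom_module_simps)
  show ?thesis
  proof (rule mod_isomorphicI_same_fibres[where W = ?W and \<Phi> = "coset_hom A M N"])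
    show "coset_hom A M N ` carrier ?W = carrier (Hom_module A M (prod_mod_dsum A N))"
    proof
      show "coset_hom A M N ` carrier ?W \<subseteq> carrier (Hom_module A M (prod_mod_dsum A N))"
        using coset_hom_mod_hom[OF module N] by (auto simp: W Hom_module_simps)
      show "carrier (Hom_module A M (prod_mod_dsum A N)) \<subseteq> coset_hom A M N ` carrier ?W"
      proof
        fix f assume "f \<in> carrier (Hom_module A M (prod_mod_dsum A N))"
        then obtain g where "\<forall>n. g n \<in> mod_hom A M (N n)" "f = coset_hom A M N g"
          using coset_hom_surj[where N = N, OF A N] by (auto simp: Hom_module_simps)
        then show "f \<in> coset_hom A M N ` carrier ?W" by (auto simp: W)
      qed
    qed
    show "dsum_coset_map A N' \<phi> ` carrier ?W = carrier (prod_mod_dsum A N')"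
      by (rule dsum_coset_map_surj[OF N' \<phi> \<phi>_bij])
    fix u v assume "u \<in> carrier ?W" "v \<in> carrier ?W"
    then show "coset_hom A M N u = coset_hom A M N v \<longleftrightarrow>
        dsum_coset_map A N' \<phi> u = dsum_coset_map A N' \<phi> v"
      by (simp add: W coset_hom_eq_iff[OF N] dsum_coset_map_eq_iff[OF N' \<phi> \<phi>_bij])
  next
    fix u v assume "u \<in> carrier ?W" "v \<in> carrier ?W"
    then show "u \<oplus>\<^bsub>?W\<^esub> v \<in> carrier ?W"
      using Hom_module_add_closed[OF module N] by (simp add: prod_module_simps Hom_module_simps(1))
  next
    fix c u assume "c \<in> carrier A" "u \<in> carrier ?W"
    then show "c \<odot>\<^bsub>?W\<^esub> u \<in> carrier ?W"
      using Hom_module_smult_closed[OF module N] by (simp add: prod_module_simps Hom_module_simps(1))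
  qed (simp_all add: coset_hom_add[OF N] coset_hom_smult[OF N]
      dsum_coset_map_add[OF N' \<phi> \<phi>_bij] dsum_coset_map_smult[OF N' \<phi> \<phi>_bij])
qed

theorem proposition2p7:
  fixes A :: "('a, 'c) ring_scheme" and m :: "'a set"
    and I :: "nat \<Rightarrow> 'a set" and M :: "('a, 'm) module"
  assumes "noetherian_domain A"
    and "local_ring_with A m"
    and "normal_domain A"
    and "\<And>n. primeideal (I n) A"
    and "\<And>n. I n \<noteq> {\<zero>\<^bsub>A\<^esub>}"
    and "\<forall>i\<ge>1. \<exists>n\<^sub>i. \<forall>n\<ge>n\<^sub>i. I n \<subseteq> ideal_pow A m i"
    and "module A M"
    and "fin_gen_module A M"
    and "\<And>n. mod_isomorphic A (Hom_module A M (quot_module A (self_module A) (I n)))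
                                (quot_module A (self_module A) (I n))"
  shows "mod_isomorphic A
           (Hom_module A M (quot_module A
              (prod_module A (\<lambda>n. quot_module A (self_module A) (I n)))
              (dsum_set (\<lambda>n. quot_module A (self_module A) (I n)))))
           (quot_module A
              (prod_module A (\<lambda>n. quot_module A (self_module A) (I n)))
              (dsum_set (\<lambda>n. quot_module A (self_module A) (I n))))"
proof -
  have noetherian: "noetherian_ring A" and cring: "cring A"
    using assms(1) by (simp_all add: noetherian_domain_def domain_def noetherian_ring_def)
  have "module A (quot_module A (self_module A) (I n))" for n
    using assms(4) primeideal.axioms(1)
    by (intro module_quot_module[OF module_self_module[OF cring]] submodule_self_module_ideal[OF cring])
      blast
  moreover obtain G where "finite G" "G \<subseteq> carrier M"
    and "carrier M = \<Inter>{H. submodule H A M \<and> G \<subseteq> H}"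
    using assms(8) unfolding fin_gen_module_def by blast
  moreover obtain r and xs :: "nat \<Rightarrow> 'm" where "G = xs ` {..<r}"
    using finite_imp_nat_seg_image_inj_on[OF \<open>finite G\<close>] by (metis lessThan_def)
  ultimately show ?thesis
    using generated_module.Hom_prod_mod_dsum_isomorphic[OF _ noetherian _ _ assms(9)]
    by (simp add: generated_module_def assms(7))
qed

end
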